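(* For $N\ge1$, \[\overline{Z_N}(\{u\}_N|\{w\}_N)=\frac{\prod_{j=1}^N(1-t)dw_j\prod_{j,k=1}^N(atu_j+bw_k)(eu_j+tfw_k)}{(t^2cd)^{N(N-1)/2}\prod_{1\le j<k\le N}(u_j-u_k)(w_k-w_j)}\det_{1\le j,k\le N}\Big(\frac{1}{(atu_j+bw_k)(eu_j+tfw_k)}\Big).\]
   Context: Fix complex parameters $t,a,b,c,d,e,f$, all nonzero, with $t\neq1$, satisfying $cd+af=0$ and $tcd+be=0$. The inhomogeneous $L$-operator $L_{aj}(u,w)$ on $W_a\otimes V_j$ ($\cong\mathbb{C}^2\otimes\mathbb{C}^2$, basis $|0\rangle,|1\rangle$) has matrix elements ${}_a\langle\gamma|{}_j\langle\delta|L_{aj}(u,w)|\alpha\rangle_a|\beta\rangle_j=[L(u,w)]^{\gamma\delta}_{\alpha\beta}$: $[L]^{00}_{00}=au+bw$, $[L]^{01}_{01}=atu+bw$, $[L]^{01}_{10}=(1-t)cu$, $[L]^{10}_{01}=(1-t)dw$, $[L]^{10}_{10}=eu+fw$, $[L]^{11}_{11}=eu+tfw$, all others $0$. Define $C_N(u|\{w\}_N)={}_a\langle1|L_{aN}(u,w_N)\cdots L_{a1}(u,w_1)|0\rangle_a$ on $V_1\otimes\cdots\otimes V_N$ and $\overline{Z_N}(\{u\}_N|\{w\}_N)=\langle\Omega|C_N(u_N|\{w\}_N)\cdots C_N(u_1|\{w\}_N)|1\cdots N\rangle$ with $\langle\Omega|=\langle0|^{\otimes N}$, $|1\cdots N\rangle=|1\rangle^{\otimes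 N}$. *)

theory Defs
  imports "HOL-Library.FuncSet" "Jordan_Normal_Form.Determinant"
begin

text \<open>Matrix elements [L(u,w)]^{gamma delta}_{alpha beta} of the inhomogeneous L-operator;
  basis states are encoded as the naturals 0 and 1.\<close>
definition Lop :: "complex \<Rightarrow> complex \<Rightarrow> complex \<Rightarrow> complex \<Rightarrow> complex \<Rightarrow> complex \<Rightarrow> complex
    \<Rightarrow> complex \<Rightarrow> complex \<Rightarrow> nat \<Rightarrow> nat \<Rightarrow> nat \<Rightarrow> nat \<Rightarrow> complex" where
  "Lop t a b c d e f u w \<gamma> \<delta> \<alpha> \<beta> =
     (if (\<gamma>,\<delta>,\<alpha>,\<beta>) = (0,0,0,0) then a*u + b*w
      else if (\<gamma>,\<delta>,\<alpha>,\<beta>) = (0,1,0,1) then a*t*u + b*w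
      else if (\<gamma>,\<delta>,\<alpha>,\<beta>) = (0,1,1,0) then (1-t)*c*u
      else if (\<gamma>,\<delta>,\<alpha>,\<beta>) = (1,0,0,1) then (1-t)*d*w
      else if (\<gamma>,\<delta>,\<alpha>,\<beta>) = (1,0,1,0) then e*u + f*w
      else if (\<gamma>,\<delta>,\<alpha>,\<beta>) = (1,1,1,1) then e*u + t*f*w
      else 0)"

text \<open>Basis configurations of V_1 (x) ... (x) V_N: maps {1..N} -> {0,1}.\<close>
definition configs :: "nat \<Rightarrow> (nat \<Rightarrow> nat) set" where
  "configs N = PiE {1..N} (\<lambda>_. {0,1})"

definition aux_paths :: "nat \<Rightarrow> (nat \<Rightarrow> nat) set" where
  "aux_paths N = {s \<in> PiE {0..N} (\<lambda>_. {0,1}). s 0 = 0 \<and> s N = 1}"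

text \<open>Matrix element <delta| C_N(u|{w}_N) |beta> with
  C_N = _a<1| L_{aN}(u,w_N) ... L_{a1}(u,w_1) |0>_a  (L_{a1} acts first).\<close>
definition Cop :: "complex \<Rightarrow> complex \<Rightarrow> complex \<Rightarrow> complex \<Rightarrow> complex \<Rightarrow> complex \<Rightarrow> complex
    \<Rightarrow> nat \<Rightarrow> complex \<Rightarrow> (nat \<Rightarrow> complex) \<Rightarrow> (nat \<Rightarrow> nat) \<Rightarrow> (nat \<Rightarrow> nat) \<Rightarrow> complex" where
  "Cop t a b c d e f N u w \<delta> \<beta> =
     (\<Sum>s\<in>aux_paths N. \<Prod>j=1..N. Lop t a b c d e f u (w j) (s j) (\<delta> j) (s (j-1)) (\<beta> j))"

text \<open>Components of C_N(u_k|w)...C_N(u_1|w)|1...1>.\<close>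
fun Zvec :: "complex \<Rightarrow> complex \<Rightarrow> complex \<Rightarrow> complex \<Rightarrow> complex \<Rightarrow> complex \<Rightarrow> complex
    \<Rightarrow> nat \<Rightarrow> (nat \<Rightarrow> complex) \<Rightarrow> (nat \<Rightarrow> complex) \<Rightarrow> nat \<Rightarrow> (nat \<Rightarrow> nat) \<Rightarrow> complex" where
  "Zvec t a b c d e f N u w 0 \<delta> = (if \<delta> = restrict (\<lambda>_. 1) {1..N} then 1 else 0)"
| "Zvec t a b c d e f N u w (Suc k) \<delta> =
     (\<Sum>\<beta>\<in>configs N. Cop t a b c d e f N (u (Suc k)) w \<delta> \<beta> * Zvec t a b c d e f N u w k \<beta>)"

text \<open>Zbar_N({u}_N|{w}_N) = <Omega| C_N(u_N|w) ... C_N(u_1|w) |1...N>.\<close>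
definition Zbar :: "complex \<Rightarrow> complex \<Rightarrow> complex \<Rightarrow> complex \<Rightarrow> complex \<Rightarrow> complex \<Rightarrow> complex
    \<Rightarrow> nat \<Rightarrow> (nat \<Rightarrow> complex) \<Rightarrow> (nat \<Rightarrow> complex) \<Rightarrow> complex" where
  "Zbar t a b c d e f N u w = Zvec t a b c d e f N u w N (restrict (\<lambda>_. 0) {1..N})"

end

theory Submission
  imports Defs "HOL-Computational_Algebra.Polynomial"
begin

text \<open>Izergin--Korepin argument. After clearing denominators the identity reads
  \<open>defect N u w = 0\<close>, and the defect is a polynomial of degree \<open>\<le> 2(N-1)\<close> in \<open>u\<^sub>N\<close>.
  An R-matrix intertwines the row operators (its existence is exactly the pair of constraints
  \<open>cd + af = 0\<close>, \<open>tcd + be = 0\<close>), so the partition function is symmetric in the \<open>w\<close>'s,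
  while the determinant and the Vandermonde product are antisymmetric; hence the defect only
  changes sign under adjacent exchanges of the \<open>w\<close>'s. At \<open>e u\<^sub>N + f w\<^sub>N = 0\<close> the row of \<open>u\<^sub>N\<close>
  freezes and both sides reduce to size \<open>N-1\<close> with the same factor; moving \<open>w\<^sub>k\<close> to the last
  place gives the same at \<open>e u\<^sub>N + f w\<^sub>k = 0\<close>. With the zeros \<open>u\<^sub>N = u\<^sub>j\<close> of both sides this
  yields \<open>2N-1\<close> roots, so the defect vanishes by induction on \<open>N\<close>. Coincidences among these
  points are harmless: a polynomial vanishing off a finite set is zero.\<close>

declare One_nat_def [simp del]

section \<open>Polynomial functions of bounded degree\<close>

definition polyfun :: "('a::idom \<Rightarrow> 'a) \<Rightarrow> nat \<Rightarrow> bool" where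
  "polyfun F n \<longleftrightarrow> (\<exists>p. degree p \<le> n \<and> (\<forall>x. F x = poly p x))"

lemma polyfun_const [simp, intro]: "polyfun (\<lambda>x. k) n"
  unfolding polyfun_def by (rule exI[of _ "[:k:]"]) auto

lemma polyfun_linear: "polyfun (\<lambda>x. p * x + q) 1"
  unfolding polyfun_def by (rule exI[of _ "[:q, p:]"]) (auto simp: algebra_simps)

lemma polyfun_id [intro]: "1 \<le> n \<Longrightarrow> polyfun (\<lambda>x. x) n"
  unfolding polyfun_def by (rule exI[of _ "[:0,1:]"]) auto

lemma polyfun_mono: "polyfun F m \<Longrightarrow> m \<le> n \<Longrightarrow> polyfun F n"
  unfolding polyfun_def by (meson order_trans)

lemma polyfun_add [intro]: "polyfun F n \<Longrightarrow> polyfun G n \<Longrightarrow> polyfun (\<lambda>x. F x + G x) n"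
  unfolding polyfun_def
proof (elim exE conjE)
  fix p q assume "degree p \<le> n" "\<forall>x. F x = poly p x" "degree q \<le> n" "\<forall>x. G x = poly q x"
  then show "\<exists>r. degree r \<le> n \<and> (\<forall>x. F x + G x = poly r x)"
    by (intro exI[of _ "p + q"]) (auto intro: degree_add_le)
qed

lemma polyfun_uminus [intro]: "polyfun F n \<Longrightarrow> polyfun (\<lambda>x. - F x) n"
  unfolding polyfun_def
proof (elim exE conjE)
  fix p assume "degree p \<le> n" "\<forall>x. F x = poly p x"
  then show "\<exists>r. degree r \<le> n \<and> (\<forall>x. - F x = poly r x)"
    by (intro exI[of _ "- p"]) auto
qed

lemma polyfun_diff [intro]: "polyfun F n \<Longrightarrow> polyfun G n \<Longrightarrow> polyfun (\<lambda>x. F x - G x) n"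
  using polyfun_add[of F n "\<lambda>x. - G x"] polyfun_uminus[of G n] by simp

lemma polyfun_mult: "polyfun F m \<Longrightarrow> polyfun G n \<Longrightarrow> polyfun (\<lambda>x. F x * G x) (m + n)"
  unfolding polyfun_def
proof (elim exE conjE)
  fix p q assume "degree p \<le> m" "\<forall>x. F x = poly p x" "degree q \<le> n" "\<forall>x. G x = poly q x"
  then show "\<exists>r. degree r \<le> m + n \<and> (\<forall>x. F x * G x = poly r x)"
    by (intro exI[of _ "p * q"]) (auto intro: order.trans[OF degree_mult_le])
qed

lemma polyfun_mult_le:
  "polyfun F m \<Longrightarrow> polyfun G n \<Longrightarrow> m + n \<le> k \<Longrightarrow> polyfun (\<lambda>x. F x * G x) k"
  using polyfun_mult polyfun_mono by blast

lemma polyfun_scale: "polyfun F n \<Longrightarrow> polyfun (\<lambda>x. k * F x) n"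
  using polyfun_mult[OF polyfun_const[where n=0]] by simp

lemma polyfun_sum:
  "finite A \<Longrightarrow> (\<And>i. i \<in> A \<Longrightarrow> polyfun (F i) n) \<Longrightarrow> polyfun (\<lambda>x. \<Sum>i\<in>A. F i x) n"
  by (induction A rule: finite_induct) auto

lemma polyfun_prod:
  "finite A \<Longrightarrow> (\<And>i. i \<in> A \<Longrightarrow> polyfun (F i) (d i))
    \<Longrightarrow> polyfun (\<lambda>x. \<Prod>i\<in>A. F i x) (\<Sum>i\<in>A. d i)"
  by (induction A rule: finite_induct) (auto intro: polyfun_mult)

lemma polyfun_prod_le:
  "finite A \<Longrightarrow> (\<And>i. i \<in> A \<Longrightarrow> polyfun (F i) (d i)) \<Longrightarrow> (\<Sum>i\<in>A. d i) \<le> n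
    \<Longrightarrow> polyfun (\<lambda>x. \<Prod>i\<in>A. F i x) n"
  using polyfun_prod polyfun_mono by blast

lemma polyfun_fun_upd: "polyfun (\<lambda>y. (u(i := y)) j) 1"
  by (cases "j = i") auto

lemma polyfun_eq_0_if_many_roots:
  assumes "polyfun F n" "finite S" "n < card S" "\<And>x. x \<in> S \<Longrightarrow> F x = 0"
  shows "F y = 0"
proof -
  from assms(1) obtain p where p: "degree p \<le> n" "\<And>x. F x = poly p x"
    unfolding polyfun_def by auto
  have "p = 0"
  proof (rule ccontr)
    assume "p \<noteq> 0"
    then have "card {x. poly p x = 0} \<le> degree p" by (rule card_poly_roots_bound)
    moreover have "S \<subseteq> {x. poly p x = 0}" using assms(4) p(2) by auto
    moreover have "finite {x. poly p x = 0}" using \<open>p \<noteq> 0\<close> poly_roots_finite by blast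
    ultimately have "card S \<le> degree p" by (meson card_mono order_trans)
    then show False using assms(3) p(1) by linarith
  qed
  then show ?thesis using p by simp
qed

lemma polyfun_eq_0_if_cofinite_roots:
  fixes F :: "'a::{idom, ring_char_0} \<Rightarrow> 'a"
  assumes "polyfun F n" "finite B" "\<And>x. x \<notin> B \<Longrightarrow> F x = 0"
  shows "F y = 0"
proof -
  from assms(1) obtain p where p: "degree p \<le> n" "\<And>x. F x = poly p x"
    unfolding polyfun_def by auto
  have "p = 0"
  proof (rule ccontr)
    assume "p \<noteq> 0"
    then have fin: "finite {x. poly p x = 0}" using poly_roots_finite by blast
    have "UNIV \<subseteq> B \<union> {x. poly p x = 0}" using assms(3) p(2) by auto
    then have "finite (UNIV :: 'a set)" using fin assms(2) by (meson finite_UnI finite_subset)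
    then show False by (simp add: infinite_UNIV_char_0)
  qed
  then show ?thesis using p by simp
qed

section \<open>Finite products, determinants and Vandermonde-type products\<close>

lemma permutes_atLeastLessThan_less: "p permutes {0..<(n::nat)} \<Longrightarrow> i < n \<Longrightarrow> p i < n"
  using permutes_in_image[of p "{0..<n}" i] by auto

lemma det_mat_scale_rows:
  fixes r :: "nat \<Rightarrow> 'a :: comm_ring_1"
  shows "det (mat n n (\<lambda>(i,j). r i * B i j)) = (\<Prod>i<n. r i) * det (mat n n (\<lambda>(i,j). B i j))"
proof -
  have "det (mat n n (\<lambda>(i,j). r i * B i j))
      = (\<Sum>p\<in>{p. p permutes {0..<n}}. signof p * (\<Prod>i=0..<n. r i * B i (p i)))"
    by (subst det_def'[of _ n]) (auto intro!: sum.cong prod.cong simp: permutes_atLeastLessThan_less)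
  also have "\<dots> = (\<Sum>p\<in>{p. p permutes {0..<n}}. (\<Prod>i<n. r i) * (signof p * (\<Prod>i=0..<n. B i (p i))))"
    by (intro sum.cong refl) (simp add: prod.distrib atLeast0LessThan mult_ac)
  also have "\<dots> = (\<Prod>i<n. r i) * det (mat n n (\<lambda>(i,j). B i j))"
    by (subst det_def'[of _ n]) (auto simp: sum_distrib_left permutes_atLeastLessThan_less intro!: sum.cong prod.cong)
  finally show ?thesis .
qed

abbreviation swap_adj :: "(nat \<Rightarrow> 'a) \<Rightarrow> nat \<Rightarrow> nat \<Rightarrow> 'a" where
  "swap_adj w j \<equiv> w(j := w (Suc j), Suc j := w j)"

lemma prod_swap_adj:
  assumes "j \<in> A" "Suc j \<in> A"
  shows "(\<Prod>l\<in>A. g (swap_adj w j l)) = (\<Prod>l\<in>A. g (w l))"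
proof -
  define \<tau> where "\<tau> l = (if l = j then Suc j else if l = Suc j then j else l)" for l
  have sw: "swap_adj w j l = w (\<tau> l)" for l by (auto simp: \<tau>_def)
  have inv: "\<tau> (\<tau> l) = l" for l by (auto simp: \<tau>_def)
  have inj: "inj_on \<tau> A" by (rule inj_onI) (metis inv)
  have img: "\<tau> ` A = A"
  proof (intro equalityI subsetI)
    fix x assume "x \<in> \<tau> ` A" then show "x \<in> A" using assms by (auto simp: \<tau>_def)
  next
    fix x assume "x \<in> A"
    then show "x \<in> \<tau> ` A" using assms inv by (intro image_eqI[of _ _ "\<tau> x"]) (auto simp: \<tau>_def)
  qed
  have "(\<Prod>l\<in>A. g (swap_adj w j l)) = (\<Prod>l\<in>A. g (w (\<tau> l)))" by (simp only: sw)
  also have "\<dots> = (\<Prod>l\<in>\<tau> ` A. g (w l))" by (simp add: prod.reindex[OF inj])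
  also have "\<dots> = (\<Prod>l\<in>A. g (w l))" by (simp add: img)
  finally show ?thesis .
qed

lemma prod_upper_triangle:
  "(\<Prod>j=1..(N::nat). \<Prod>k=j+1..N. g j k) = (\<Prod>k=1..N. \<Prod>j\<in>{1..<k}. (g j k :: 'a::comm_monoid_mult))"
proof (induction N)
  case 0 then show ?case by simp
next
  case (Suc N)
  have "(\<Prod>j=1..Suc N. \<Prod>k=j+1..Suc N. g j k) = (\<Prod>j=1..N. (\<Prod>k=j+1..N. g j k) * g j (Suc N))"
    by (simp add: prod.cl_ivl_Suc)
  also have "\<dots> = (\<Prod>j=1..N. \<Prod>k=j+1..N. g j k) * (\<Prod>j=1..N. g j (Suc N))"
    by (simp add: prod.distrib)
  also have "\<dots> = (\<Prod>k=1..Suc N. \<Prod>j\<in>{1..<k}. g j k)"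
    unfolding Suc.IH by (simp add: prod.cl_ivl_Suc atLeastLessThanSuc_atLeastAtMost)
  finally show ?case .
qed

lemma Suc_times_diff_1_div_2: "Suc M * (Suc M - 1) div 2 = M * (M - 1) div 2 + M"
proof -
  have "Suc M * (Suc M - 1) = M * (M - 1) + M * 2" by (cases M) (simp_all add: algebra_simps)
  then show ?thesis by simp
qed

definition diffprod :: "nat \<Rightarrow> (nat \<Rightarrow> 'a::comm_ring_1) \<Rightarrow> 'a" where
  "diffprod N x = (\<Prod>k=1..N. \<Prod>j\<in>{1..<k}. x k - x j)"

lemma diffprod_cong:
  assumes "\<And>j. 1 \<le> j \<Longrightarrow> j \<le> N \<Longrightarrow> x j = x' j"
  shows "diffprod N x = diffprod N x'"
  unfolding diffprod_def
proof (intro prod.cong refl)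
  fix k j assume "k \<in> {1..N}" "j \<in> {1..<k}"
  then have jk: "1 \<le> j" "j \<le> N" "1 \<le> k" "k \<le> N" by auto
  then show "x k - x j = x' k - x' j" using assms[OF jk(1,2)] assms[OF jk(3,4)] by simp
qed

lemma diffprod_Suc: "diffprod (Suc N) x = diffprod N x * (\<Prod>j=1..N. x (Suc N) - x j)"
  unfolding diffprod_def by (simp add: prod.cl_ivl_Suc atLeastLessThanSuc_atLeastAtMost)

lemma diffprod_eq_0:
  assumes "i \<noteq> j" "i \<in> {1..N}" "j \<in> {1..N}" "x i = x j"
  shows "diffprod N x = 0"
proof -
  obtain p q where pq: "p \<in> {1..N}" "q \<in> {1..<p}" "x p = x q"
  proof (cases "j < i")
    case True then show ?thesis using assms by (intro that[of i j]) auto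
  next
    case False then show ?thesis using assms by (intro that[of j i]) auto
  qed
  then have "(\<Prod>j\<in>{1..<p}. x p - x j) = 0" by (intro prod_zero) (auto intro!: bexI[of _ q])
  then show ?thesis unfolding diffprod_def using pq by (intro prod_zero) (auto intro!: bexI[of _ p])
qed

lemma diffprod_neq_0:
  fixes x :: "nat \<Rightarrow> 'a::idom"
  assumes "\<And>i j. i \<in> {1..N} \<Longrightarrow> j \<in> {1..N} \<Longrightarrow> i \<noteq> j \<Longrightarrow> x i \<noteq> x j"
  shows "diffprod N x \<noteq> 0"
  unfolding diffprod_def using assms by (fastforce simp: prod_zero_iff)

lemma diffprod_swap_adj:
  assumes j: "1 \<le> j" "Suc j \<le> N"
  shows "diffprod N (swap_adj x j) = - diffprod N x"
proof -
  obtain i where ji: "j = Suc i" using j by (cases j) auto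
  obtain k where Nk: "N = Suc j + k" using j le_Suc_ex by blast
  let ?x = "swap_adj x j"
  have base: "diffprod (Suc j) ?x = - diffprod (Suc j) x"
  proof -
    have c: "diffprod i ?x = diffprod i x" by (rule diffprod_cong) (auto simp: ji)
    have p1: "(\<Prod>l=1..i. ?x j - ?x l) = (\<Prod>l=1..i. x (Suc j) - x l)"
      by (intro prod.cong refl) (auto simp: ji)
    have p2: "(\<Prod>l=1..i. ?x (Suc j) - ?x l) = (\<Prod>l=1..i. x j - x l)"
      by (intro prod.cong refl) (auto simp: ji)
    have "diffprod (Suc j) ?x
        = diffprod i ?x * (\<Prod>l=1..i. ?x j - ?x l) * ((\<Prod>l=1..i. ?x (Suc j) - ?x l) * (?x (Suc j) - ?x j))"
      unfolding ji diffprod_Suc by simp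
    also have "\<dots> = - (diffprod i x * (\<Prod>l=1..i. x j - x l) * ((\<Prod>l=1..i. x (Suc j) - x l) * (x (Suc j) - x j)))"
      unfolding c p1 p2 by (simp add: algebra_simps)
    also have "\<dots> = - diffprod (Suc j) x"
      unfolding ji diffprod_Suc by simp
    finally show ?thesis .
  qed
  have "diffprod (Suc j + m) ?x = - diffprod (Suc j + m) x" for m
  proof (induction m)
    case 0 then show ?case using base by (simp only: add_0_right)
  next
    case (Suc m)
    have "(\<Prod>l=1..Suc j + m. x (Suc (Suc j + m)) - ?x l) = (\<Prod>l=1..Suc j + m. x (Suc (Suc j + m)) - x l)"
      using prod_swap_adj[of j "{1..Suc j + m}" "\<lambda>z. x (Suc (Suc j + m)) - z" x] j by simp
    moreover have "?x (Suc (Suc j + m)) = x (Suc (Suc j + m))" by simp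
    ultimately show ?case using Suc.IH by (simp only: add_Suc_right diffprod_Suc) simp
  qed
  then show ?thesis using Nk by simp
qed

definition rotate_to_last :: "nat \<Rightarrow> nat \<Rightarrow> (nat \<Rightarrow> 'a) \<Rightarrow> nat \<Rightarrow> 'a" where
  "rotate_to_last k N w =
     (\<lambda>i. if i < k then w i else if i < N then w (Suc i) else if i = N then w k else w i)"

lemma rotate_to_last_self: "rotate_to_last N N w = w"
  by (auto simp: rotate_to_last_def fun_eq_iff)

lemma rotate_to_last_swap_adj: "k < N \<Longrightarrow> rotate_to_last k N w = rotate_to_last (Suc k) N (swap_adj w k)"
  by (auto simp: rotate_to_last_def fun_eq_iff)

lemma rotate_to_last_last: "k \<le> N \<Longrightarrow> rotate_to_last k N w N = w k"
  by (auto simp: rotate_to_last_def)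

lemma invariant_under_rotate_to_last:
  assumes swap: "\<And>w j. 1 \<le> j \<Longrightarrow> Suc j \<le> N \<Longrightarrow> P (swap_adj w j) \<longleftrightarrow> P w"
    and "1 \<le> k" "k \<le> N"
  shows "P (rotate_to_last k N w) \<longleftrightarrow> P w"
  using assms(2,3)
proof (induction "N - k" arbitrary: k w)
  case 0
  then show ?case by (simp add: rotate_to_last_self)
next
  case (Suc m)
  then have "k < N" by arith
  then have "P (rotate_to_last k N w) \<longleftrightarrow> P (rotate_to_last (Suc k) N (swap_adj w k))"
    by (simp add: rotate_to_last_swap_adj)
  also have "\<dots> \<longleftrightarrow> P (swap_adj w k)"
    using Suc \<open>k < N\<close> by (metis Suc_diff_Suc Suc_leI Suc_le_mono le_SucI nat.inject)
  also have "\<dots> \<longleftrightarrow> P w"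
    using swap[of k w] Suc.prems \<open>k < N\<close> by simp
  finally show ?case .
qed

lemma sum_intertwine:
  fixes R C C' :: "'b \<Rightarrow> 'b \<Rightarrow> 'a::comm_semiring_1"
  assumes RC: "\<And>\<beta>. \<beta> \<in> S \<Longrightarrow> (\<Sum>\<gamma>\<in>S. R \<delta> \<gamma> * C \<gamma> \<beta>) = (\<Sum>\<gamma>\<in>S. C' \<delta> \<gamma> * R \<gamma> \<beta>)"
    and RZ: "\<And>\<gamma>. \<gamma> \<in> S \<Longrightarrow> (\<Sum>\<beta>\<in>S. R \<gamma> \<beta> * Z \<beta>) = \<rho> * Z' \<gamma>"
  shows "(\<Sum>\<gamma>\<in>S. R \<delta> \<gamma> * (\<Sum>\<beta>\<in>S. C \<gamma> \<beta> * Z \<beta>)) = \<rho> * (\<Sum>\<gamma>\<in>S. C' \<delta> \<gamma> * Z' \<gamma>)"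
proof -
  have "(\<Sum>\<gamma>\<in>S. R \<delta> \<gamma> * (\<Sum>\<beta>\<in>S. C \<gamma> \<beta> * Z \<beta>)) = (\<Sum>\<gamma>\<in>S. \<Sum>\<beta>\<in>S. R \<delta> \<gamma> * C \<gamma> \<beta> * Z \<beta>)"
    by (simp add: sum_distrib_left mult.assoc)
  also have "\<dots> = (\<Sum>\<beta>\<in>S. (\<Sum>\<gamma>\<in>S. R \<delta> \<gamma> * C \<gamma> \<beta>) * Z \<beta>)"
    by (subst sum.swap) (simp add: sum_distrib_right)
  also have "\<dots> = (\<Sum>\<beta>\<in>S. \<Sum>\<gamma>\<in>S. C' \<delta> \<gamma> * (R \<gamma> \<beta> * Z \<beta>))"
    by (simp add: RC sum_distrib_right mult.assoc)
  also have "\<dots> = (\<Sum>\<gamma>\<in>S. C' \<delta> \<gamma> * (\<Sum>\<beta>\<in>S. R \<gamma> \<beta> * Z \<beta>))"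
    by (subst sum.swap) (simp add: sum_distrib_left)
  also have "\<dots> = (\<Sum>\<gamma>\<in>S. C' \<delta> \<gamma> * (\<rho> * Z' \<gamma>))"
    by (intro sum.cong refl) (simp add: RZ)
  also have "\<dots> = \<rho> * (\<Sum>\<gamma>\<in>S. C' \<delta> \<gamma> * Z' \<gamma>)"
    by (simp add: sum_distrib_left mult_ac)
  finally show ?thesis .
qed

section \<open>Spin configurations\<close>

abbreviation ones :: "nat \<Rightarrow> nat \<Rightarrow> nat" where "ones N \<equiv> restrict (\<lambda>_. 1) {1..N}"
abbreviation zeros :: "nat \<Rightarrow> nat \<Rightarrow> nat" where "zeros N \<equiv> restrict (\<lambda>_. 0) {1..N}"

lemma ones_in_configs: "ones N \<in> configs N"
  unfolding configs_def by auto

lemma zeros_in_configs: "zeros N \<in> configs N"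
  unfolding configs_def by auto

lemma finite_configs: "finite (configs N)"
  unfolding configs_def by (simp add: finite_PiE)

lemma configs_mem: "\<delta> \<in> configs N \<Longrightarrow> 1 \<le> i \<Longrightarrow> i \<le> N \<Longrightarrow> \<delta> i \<in> {0,1}"
  unfolding configs_def using PiE_mem[of \<delta> "{1..N}" "\<lambda>_. {0::nat,1}" i] by auto

lemma configs_undefined: "\<delta> \<in> configs N \<Longrightarrow> i \<notin> {1..N} \<Longrightarrow> \<delta> i = undefined"
  unfolding configs_def by (auto simp: PiE_def extensional_def)

lemma configs_fun_upd:
  "\<delta> \<in> configs N \<Longrightarrow> 1 \<le> j \<Longrightarrow> j \<le> N \<Longrightarrow> x \<in> {0,1} \<Longrightarrow> \<delta>(j := x) \<in> configs N"
  unfolding configs_def by (auto simp: PiE_def extensional_def Pi_def)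

lemma configs_eqI:
  assumes "\<delta> \<in> configs N" "\<gamma> \<in> configs N" "\<And>i. 1 \<le> i \<Longrightarrow> i \<le> N \<Longrightarrow> \<delta> i = \<gamma> i"
  shows "\<delta> = \<gamma>"
proof
  fix i show "\<delta> i = \<gamma> i"
    using assms configs_undefined[of \<delta> N i] configs_undefined[of \<gamma> N i] by (cases "i \<in> {1..N}") auto
qed

definition agree_outside :: "nat \<Rightarrow> (nat \<Rightarrow> nat) \<Rightarrow> (nat \<Rightarrow> nat) \<Rightarrow> bool" where
  "agree_outside j \<delta> \<gamma> \<longleftrightarrow> (\<forall>i. i \<noteq> j \<and> i \<noteq> Suc j \<longrightarrow> \<delta> i = \<gamma> i)"

lemma agree_outside_commute: "agree_outside j \<delta> \<gamma> = agree_outside j \<gamma> \<delta>"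
  unfolding agree_outside_def by auto

lemma agree_outside_eq_iff:
  "agree_outside j \<delta> \<gamma> \<and> \<delta> j = \<gamma> j \<and> \<delta> (Suc j) = \<gamma> (Suc j) \<longleftrightarrow> \<delta> = \<gamma>"
  unfolding agree_outside_def by (metis ext)

lemma sum_configs_agree_outside:
  assumes \<delta>: "\<delta> \<in> configs N" and j: "1 \<le> j" "Suc j \<le> N"
  shows "(\<Sum>\<gamma>\<in>configs N. if agree_outside j \<delta> \<gamma> then G \<gamma> else 0)
       = (\<Sum>x\<in>{0::nat,1}. \<Sum>y\<in>{0::nat,1}. G (\<delta>(j := x, Suc j := y)))"
proof -
  let ?f = "\<lambda>(x,y). \<delta>(j := x, Suc j := y)"
  let ?S = "?f ` ({0::nat,1} \<times> {0::nat,1})"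
  have sub: "?S \<subseteq> configs N"
    using configs_fun_upd[OF configs_fun_upd[OF \<delta>], of j _ "Suc j"] j by auto
  have out: "\<not> agree_outside j \<delta> \<gamma>" if g: "\<gamma> \<in> configs N - ?S" for \<gamma>
  proof
    assume "agree_outside j \<delta> \<gamma>"
    then have "\<gamma> = \<delta>(j := \<gamma> j, Suc j := \<gamma> (Suc j))"
      unfolding agree_outside_def by (auto simp: fun_eq_iff)
    moreover have "\<gamma> j \<in> {0,1}" "\<gamma> (Suc j) \<in> {0,1}" using g configs_mem[of \<gamma> N] j by auto
    ultimately have "\<gamma> \<in> ?S" by (intro image_eqI[of _ _ "(\<gamma> j, \<gamma> (Suc j))"]) auto
    then show False using g by auto
  qed
  have inj: "inj_on ?f ({0::nat,1} \<times> {0::nat,1})"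
  proof (rule inj_onI, clarify)
    fix x y x' y' assume h: "\<delta>(j := x, Suc j := y) = \<delta>(j := x', Suc j := y')"
    show "x = x' \<and> y = y'" using fun_cong[OF h, of j] fun_cong[OF h, of "Suc j"] by auto
  qed
  have "(\<Sum>\<gamma>\<in>configs N. if agree_outside j \<delta> \<gamma> then G \<gamma> else 0)
      = (\<Sum>\<gamma>\<in>?S. if agree_outside j \<delta> \<gamma> then G \<gamma> else 0)"
    by (rule sum.mono_neutral_right[OF finite_configs sub]) (use out in auto)
  also have "\<dots> = (\<Sum>p\<in>{0::nat,1} \<times> {0::nat,1}. if agree_outside j \<delta> (?f p) then G (?f p) else 0)"
    by (subst sum.reindex[OF inj]) simp
  also have "\<dots> = (\<Sum>x\<in>{0::nat,1}. \<Sum>y\<in>{0::nat,1}. G (\<delta>(j := x, Suc j := y)))"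
    by (simp add: agree_outside_def add_ac)
  finally show ?thesis .
qed

lemma configs_last_up_image:
  assumes N: "N = Suc M"
  shows "{\<beta>\<in>configs N. \<beta> N = 1} = (\<lambda>\<beta>'. \<beta>'(N := 1)) ` configs M"
proof (intro equalityI subsetI)
  fix \<beta> assume b: "\<beta> \<in> {\<beta>\<in>configs N. \<beta> N = 1}"
  have "restrict \<beta> {1..M} \<in> configs M" using b unfolding configs_def N by (auto simp: PiE_def Pi_def)
  moreover have "\<beta> = (restrict \<beta> {1..M})(N := 1)"
  proof
    fix i show "\<beta> i = ((restrict \<beta> {1..M})(N := 1)) i"
      using b configs_undefined[of \<beta> N i] N by (cases "i = N") (auto simp: restrict_def)
  qed
  ultimately show "\<beta> \<in> (\<lambda>\<beta>'. \<beta>'(N := 1)) ` configs M" by blast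
next
  fix \<beta> assume "\<beta> \<in> (\<lambda>\<beta>'. \<beta>'(N := 1)) ` configs M"
  then obtain \<beta>' where "\<beta>' \<in> configs M" "\<beta> = \<beta>'(N := 1)" by auto
  then show "\<beta> \<in> {\<beta>\<in>configs N. \<beta> N = 1}" unfolding configs_def N
    by (auto simp: PiE_def Pi_def extensional_def)
qed

lemma restrict_configs_fun_upd_last:
  "N = Suc M \<Longrightarrow> \<beta> \<in> configs M \<Longrightarrow> restrict (\<beta>(N := x)) {1..M} = \<beta>"
  by (rule ext) (auto simp: restrict_def configs_undefined)

lemma sum_configs_last_one:
  assumes N: "N = Suc M"
  shows "(\<Sum>\<beta>\<in>configs N. if \<beta> N = 1 then g (restrict \<beta> {1..M}) else 0) = (\<Sum>\<beta>\<in>configs M. g \<beta>)"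
proof -
  have inj: "inj_on (\<lambda>\<beta>'. \<beta>'(N := 1)) (configs M)"
    by (rule inj_on_inverseI[where g="\<lambda>\<beta>. restrict \<beta> {1..M}"]) (simp add: restrict_configs_fun_upd_last[OF N])
  have "(\<Sum>\<beta>\<in>configs N. if \<beta> N = 1 then g (restrict \<beta> {1..M}) else 0)
      = (\<Sum>\<beta>\<in>{\<beta>\<in>configs N. \<beta> N = 1}. g (restrict \<beta> {1..M}))"
    by (simp add: sum.inter_filter finite_configs)
  also have "\<dots> = (\<Sum>\<beta>\<in>configs M. g (restrict (\<beta>(N := 1)) {1..M}))"
    unfolding configs_last_up_image[OF N] by (rule sum.reindex[OF inj, unfolded comp_def])
  also have "\<dots> = (\<Sum>\<beta>\<in>configs M. g \<beta>)"
    by (intro sum.cong refl) (simp add: restrict_configs_fun_upd_last[OF N])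
  finally show ?thesis .
qed

section \<open>Monodromy matrix elements\<close>

locale L_operator =
  fixes t a b c d e f :: complex
  assumes t_nz: "t \<noteq> 0" and a_nz: "a \<noteq> 0" and b_nz: "b \<noteq> 0" and c_nz: "c \<noteq> 0"
    and d_nz: "d \<noteq> 0" and e_nz: "e \<noteq> 0" and f_nz: "f \<noteq> 0"
    and cd_af: "c*d + a*f = 0" and tcd_be: "t*c*d + b*e = 0"
begin

abbreviation "L \<equiv> Lop t a b c d e f"
abbreviation "C \<equiv> Cop t a b c d e f"
abbreviation "Zv \<equiv> Zvec t a b c d e f"
abbreviation "Zb \<equiv> Zbar t a b c d e f"

lemma f_eq: "f = -(c*d)/a"
proof -
  have "a*f = -(c*d)" using cd_af by (simp add: eq_neg_iff_add_eq_0 add.commute)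
  then show ?thesis using a_nz by (simp add: field_simps)
qed

lemma e_eq: "e = -(t*c*d)/b"
proof -
  have "b*e = -(t*c*d)" using tcd_be by (simp add: eq_neg_iff_add_eq_0 add.commute)
  then show ?thesis using b_nz by (simp add: field_simps)
qed

lemma L_outside_basis: "\<gamma> \<notin> {0,1} \<Longrightarrow> L u w \<gamma> \<delta> \<alpha> \<beta> = 0"
  unfolding Lop_def by auto

text \<open>\<open>mono u w n \<alpha> \<gamma> \<delta> \<beta>\<close> is the matrix element
  \<open>\<langle>\<gamma>|\<langle>\<delta>| L\<^sub>a\<^sub>n(u,w\<^sub>n) \<cdots> L\<^sub>a\<^sub>1(u,w\<^sub>1) |\<alpha>\<rangle>|\<beta>\<rangle>\<close> of the monodromy matrix,
  computed by inserting the auxiliary state after each factor.\<close>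

fun mono :: "complex \<Rightarrow> (nat \<Rightarrow> complex) \<Rightarrow> nat \<Rightarrow> nat \<Rightarrow> nat \<Rightarrow> (nat \<Rightarrow> nat) \<Rightarrow> (nat \<Rightarrow> nat) \<Rightarrow> complex"
where
  "mono u w 0 \<alpha> \<gamma> \<delta> \<beta> = (if \<gamma> = \<alpha> then 1 else 0)"
| "mono u w (Suc n) \<alpha> \<gamma> \<delta> \<beta> =
     (\<Sum>m\<in>{0::nat,1}. L u (w (Suc n)) \<gamma> (\<delta> (Suc n)) m (\<beta> (Suc n)) * mono u w n \<alpha> m \<delta> \<beta>)"

lemma mono_cong:
  "(\<And>i. 1 \<le> i \<Longrightarrow> i \<le> n \<Longrightarrow> \<delta> i = \<delta>' i \<and> \<beta> i = \<beta>' i \<and> w i = w' i)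
   \<Longrightarrow> mono u w n \<alpha> \<gamma> \<delta> \<beta> = mono u w' n \<alpha> \<gamma> \<delta>' \<beta>'"
proof (induction n arbitrary: \<gamma>)
  case 0 then show ?case by simp
next
  case (Suc n)
  have "\<delta> (Suc n) = \<delta>' (Suc n)" "\<beta> (Suc n) = \<beta>' (Suc n)" "w (Suc n) = w' (Suc n)"
    using Suc.prems[of "Suc n"] by auto
  moreover have "\<And>m. mono u w n \<alpha> m \<delta> \<beta> = mono u w' n \<alpha> m \<delta>' \<beta>'"
    using Suc by auto
  ultimately show ?case by simp
qed

definition aux_walks :: "nat \<Rightarrow> nat \<Rightarrow> nat \<Rightarrow> (nat \<Rightarrow> nat) set" where
  "aux_walks n \<alpha> \<gamma> = {s \<in> PiE {0..n} (\<lambda>_. {0,1}). s 0 = \<alpha> \<and> s n = \<gamma>}"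

lemma finite_aux_walks: "finite (aux_walks n \<alpha> \<gamma>)"
  unfolding aux_walks_def by (simp add: finite_PiE)

lemma aux_walks_undefined: "s \<in> aux_walks n \<alpha> \<gamma> \<Longrightarrow> n < i \<Longrightarrow> s i = undefined"
  unfolding aux_walks_def by (auto simp: PiE_def extensional_def)

lemma aux_walks_empty: "\<gamma> \<notin> {0,1} \<Longrightarrow> aux_walks n \<alpha> \<gamma> = {}"
  unfolding aux_walks_def by (auto simp: PiE_def Pi_def)

lemma aux_walks_0:
  assumes "\<alpha> \<in> {0,1}"
  shows "aux_walks 0 \<alpha> \<gamma> = (if \<gamma> = \<alpha> then {(\<lambda>_::nat. undefined::nat)(0 := \<alpha>)} else {})"
proof (cases "\<gamma> = \<alpha>")
  case True
  have "aux_walks 0 \<alpha> \<gamma> = {(\<lambda>_::nat. undefined::nat)(0 := \<alpha>)}"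
  proof (intro equalityI subsetI)
    fix s assume s: "s \<in> aux_walks 0 \<alpha> \<gamma>"
    have "s = (\<lambda>_::nat. undefined::nat)(0 := \<alpha>)"
    proof
      fix x show "s x = ((\<lambda>_::nat. undefined::nat)(0 := \<alpha>)) x"
        using s aux_walks_undefined[OF s, of x] unfolding aux_walks_def by (cases "x = 0") auto
    qed
    then show "s \<in> {(\<lambda>_::nat. undefined::nat)(0 := \<alpha>)}" by simp
  next
    fix s assume "s \<in> {(\<lambda>_::nat. undefined::nat)(0 := \<alpha>)}"
    then show "s \<in> aux_walks 0 \<alpha> \<gamma>"
      using True assms unfolding aux_walks_def by (auto simp: PiE_def extensional_def)
  qed
  then show ?thesis using True by simp
next
  case False
  then show ?thesis unfolding aux_walks_def by auto
qed

lemma aux_walks_Suc: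
  assumes "\<gamma> \<in> {0,1}"
  shows "aux_walks (Suc n) \<alpha> \<gamma> = (\<lambda>(m,s). s(Suc n := \<gamma>)) ` (SIGMA m:{0,1}. aux_walks n \<alpha> m)"
proof (intro equalityI subsetI)
  fix s assume s: "s \<in> aux_walks (Suc n) \<alpha> \<gamma>"
  let ?s = "restrict s {0..n}"
  have "?s \<in> aux_walks n \<alpha> (s n)" "s n \<in> {0,1}"
    using s unfolding aux_walks_def by (auto simp: PiE_def Pi_def)
  moreover have "s = ?s(Suc n := \<gamma>)" using s unfolding aux_walks_def
    by (auto simp: PiE_def Pi_def extensional_def fun_eq_iff restrict_def)
  ultimately show "s \<in> (\<lambda>(m,s). s(Suc n := \<gamma>)) ` (SIGMA m:{0,1}. aux_walks n \<alpha> m)"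
    by (intro image_eqI[of _ _ "(s n, ?s)"]) auto
next
  fix s assume "s \<in> (\<lambda>(m,s). s(Suc n := \<gamma>)) ` (SIGMA m:{0,1}. aux_walks n \<alpha> m)"
  then obtain m s' where "m \<in> {0,1}" "s' \<in> aux_walks n \<alpha> m" "s = s'(Suc n := \<gamma>)" by auto
  then show "s \<in> aux_walks (Suc n) \<alpha> \<gamma>" using assms unfolding aux_walks_def
    by (auto simp: PiE_def Pi_def extensional_def)
qed

lemma inj_on_aux_walks_extend:
  "inj_on (\<lambda>(m,s). s(Suc n := \<gamma>)) (SIGMA m:{0,1}. aux_walks n \<alpha> m)"
proof (rule inj_onI, clarsimp)
  fix m s m' s'
  assume h: "s \<in> aux_walks n \<alpha> m" "s' \<in> aux_walks n \<alpha> m'" "s(Suc n := \<gamma>) = s'(Suc n := \<gamma>)"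
  have "s = s'"
  proof
    fix x show "s x = s' x"
    proof (cases "x = Suc n")
      case True
      then show ?thesis using aux_walks_undefined[OF h(1)] aux_walks_undefined[OF h(2)] by simp
    next
      case False
      then show ?thesis using fun_cong[OF h(3), of x] by simp
    qed
  qed
  moreover then have "m = m'" using h unfolding aux_walks_def by auto
  ultimately show "m = m' \<and> s = s'" by auto
qed

lemma mono_eq_sum_aux_walks:
  assumes "\<alpha> \<in> {0,1}"
  shows "mono u w n \<alpha> \<gamma> \<delta> \<beta> = (\<Sum>s\<in>aux_walks n \<alpha> \<gamma>. \<Prod>j=1..n. L u (w j) (s j) (\<delta> j) (s (j-1)) (\<beta> j))"
proof (induction n arbitrary: \<gamma>)
  case 0
  show ?case using assms by (simp add: aux_walks_0)
next
  case (Suc n)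
  show ?case
  proof (cases "\<gamma> \<in> {0,1}")
    case False
    then show ?thesis by (simp add: aux_walks_empty L_outside_basis)
  next
    case True
    let ?P = "\<lambda>s. \<Prod>j=1..n. L u (w j) (s j) (\<delta> j) (s (j-1)) (\<beta> j)"
    have extend: "(\<Prod>j=1..Suc n. L u (w j) ((s(Suc n := \<gamma>)) j) (\<delta> j) ((s(Suc n := \<gamma>)) (j-1)) (\<beta> j))
        = L u (w (Suc n)) \<gamma> (\<delta> (Suc n)) m (\<beta> (Suc n)) * ?P s" if "s \<in> aux_walks n \<alpha> m" for m s
    proof -
      have "s n = m" using that unfolding aux_walks_def by auto
      moreover have "(\<Prod>j=1..n. L u (w j) ((s(Suc n := \<gamma>)) j) (\<delta> j) ((s(Suc n := \<gamma>)) (j-1)) (\<beta> j)) = ?P s"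
        by (intro prod.cong refl) auto
      ultimately show ?thesis by (simp add: mult.commute)
    qed
    have "(\<Sum>s\<in>aux_walks (Suc n) \<alpha> \<gamma>. \<Prod>j=1..Suc n. L u (w j) (s j) (\<delta> j) (s (j-1)) (\<beta> j))
      = (\<Sum>(m,s)\<in>(SIGMA m:{0,1}. aux_walks n \<alpha> m).
           \<Prod>j=1..Suc n. L u (w j) ((s(Suc n := \<gamma>)) j) (\<delta> j) ((s(Suc n := \<gamma>)) (j-1)) (\<beta> j))"
      unfolding aux_walks_Suc[OF True]
      by (subst sum.reindex[OF inj_on_aux_walks_extend]) (simp add: case_prod_beta)
    also have "\<dots> = (\<Sum>m\<in>{0,1}. \<Sum>s\<in>aux_walks n \<alpha> m.
           \<Prod>j=1..Suc n. L u (w j) ((s(Suc n := \<gamma>)) j) (\<delta> j) ((s(Suc n := \<gamma>)) (j-1)) (\<beta> j))"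
      by (rule sum.Sigma[symmetric]) (auto simp: finite_aux_walks)
    also have "\<dots> = (\<Sum>m\<in>{0,1}. \<Sum>s\<in>aux_walks n \<alpha> m. L u (w (Suc n)) \<gamma> (\<delta> (Suc n)) m (\<beta> (Suc n)) * ?P s)"
      by (intro sum.cong refl extend)
    also have "\<dots> = mono u w (Suc n) \<alpha> \<gamma> \<delta> \<beta>"
      by (simp only: mono.simps sum_distrib_left Suc.IH)
    finally show ?thesis by (rule sym)
  qed
qed

lemma C_eq_mono: "C N u w \<delta> \<beta> = mono u w N 0 1 \<delta> \<beta>"
proof -
  have "aux_paths N = aux_walks N 0 1"
    unfolding aux_paths_def aux_walks_def ..
  then show ?thesis
    unfolding Cop_def by (simp only: mono_eq_sum_aux_walks[of 0] insert_iff simp_thms)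
qed

end

section \<open>The RLL relation and symmetry in the inhomogeneities\<close>

context L_operator
begin

text \<open>An R-matrix, normalised to have polynomial entries, for the RLL relation below;
  the constraints \<open>cd + af = 0\<close> and \<open>tcd + be = 0\<close> are exactly what make it exist.\<close>

definition Rmat :: "complex \<Rightarrow> complex \<Rightarrow> nat \<Rightarrow> nat \<Rightarrow> nat \<Rightarrow> nat \<Rightarrow> complex" where
  "Rmat w1 w2 d1 d2 b1 b2 =
    (if (d1,d2,b1,b2) = (0,0,0,0) then a*b*c*d*(t*w2 - w1)
     else if (d1,d2,b1,b2) = (1,1,1,1) then a*b*c*d*(t*w2 - w1)
     else if (d1,d2,b1,b2) = (0,1,0,1) then a*b*c*d*(t-1)*w2
     else if (d1,d2,b1,b2) = (1,0,1,0) then a*b*c*d*(t-1)*w1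
     else if (d1,d2,b1,b2) = (0,1,1,0) then t*(c*d)^2*(w1-w2)
     else if (d1,d2,b1,b2) = (1,0,0,1) then (a*b)^2*(w1-w2)
     else 0)"

lemma RLL_relation:
  assumes "g \<in> {0,1}" "d1 \<in> {0,1}" "d2 \<in> {0,1}" "al \<in> {0,1}" "b1 \<in> {0,1}" "b2 \<in> {0,1}"
  shows "(\<Sum>x\<in>{0::nat,1}. \<Sum>y\<in>{0::nat,1}. Rmat w1 w2 d1 d2 x y * (\<Sum>m\<in>{0::nat,1}. L u w2 g y m b2 * L u w1 m x al b1))
       = (\<Sum>x\<in>{0::nat,1}. \<Sum>y\<in>{0::nat,1}. (\<Sum>m\<in>{0::nat,1}. L u w1 g d2 m y * L u w2 m d1 al x) * Rmat w1 w2 x y b1 b2)"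
  using assms a_nz b_nz
  apply (simp only: insert_iff empty_iff simp_thms)
  apply (elim disjE)
  apply (simp_all add: Lop_def Rmat_def)
  apply (simp_all add: f_eq e_eq field_simps)
  apply (simp_all add: algebra_simps power2_eq_square)
  done

lemma R_mono_exchange_top:
  assumes dv: "\<delta> (Suc i) \<in> {0,1}" "\<delta> (Suc (Suc i)) \<in> {0,1}" "\<beta> (Suc i) \<in> {0,1}" "\<beta> (Suc (Suc i)) \<in> {0,1}"
  shows "(\<Sum>x\<in>{0::nat,1}. \<Sum>y\<in>{0::nat,1}. Rmat (w (Suc i)) (w (Suc (Suc i))) (\<delta> (Suc i)) (\<delta> (Suc (Suc i))) x y
            * mono u w (Suc (Suc i)) \<alpha> \<gamma> (\<delta>(Suc i := x, Suc (Suc i) := y)) \<beta>)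
       = (\<Sum>x\<in>{0::nat,1}. \<Sum>y\<in>{0::nat,1}. mono u (swap_adj w (Suc i)) (Suc (Suc i)) \<alpha> \<gamma> \<delta> (\<beta>(Suc i := x, Suc (Suc i) := y))
            * Rmat (w (Suc i)) (w (Suc (Suc i))) x y (\<beta> (Suc i)) (\<beta> (Suc (Suc i))))"
proof (cases "\<gamma> \<in> {0,1}")
  case False
  then show ?thesis by (simp add: L_outside_basis)
next
  case True
  let ?w1 = "w (Suc i)" and ?w2 = "w (Suc (Suc i))"
  let ?d1 = "\<delta> (Suc i)" and ?d2 = "\<delta> (Suc (Suc i))" and ?b1 = "\<beta> (Suc i)" and ?b2 = "\<beta> (Suc (Suc i))"
  let ?T = "\<lambda>m'. mono u w i \<alpha> m' \<delta> \<beta>"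
  have T1: "\<And>m' x y. mono u w i \<alpha> m' (\<delta>(Suc i := x, Suc (Suc i) := y)) \<beta> = ?T m'"
    by (rule mono_cong) auto
  have T2: "\<And>m' x y. mono u (swap_adj w (Suc i)) i \<alpha> m' \<delta> (\<beta>(Suc i := x, Suc (Suc i) := y)) = ?T m'"
    by (rule mono_cong) auto
  have "(\<Sum>x\<in>{0::nat,1}. \<Sum>y\<in>{0::nat,1}. Rmat ?w1 ?w2 ?d1 ?d2 x y
            * mono u w (Suc (Suc i)) \<alpha> \<gamma> (\<delta>(Suc i := x, Suc (Suc i) := y)) \<beta>)
      = (\<Sum>m'\<in>{0::nat,1}. ?T m' * (\<Sum>x\<in>{0::nat,1}. \<Sum>y\<in>{0::nat,1}. Rmat ?w1 ?w2 ?d1 ?d2 x y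
            * (\<Sum>m\<in>{0::nat,1}. L u ?w2 \<gamma> y m ?b2 * L u ?w1 m x m' ?b1)))"
    by (simp add: T1 algebra_simps)
  also have "\<dots> = (\<Sum>m'\<in>{0::nat,1}. ?T m' * (\<Sum>x\<in>{0::nat,1}. \<Sum>y\<in>{0::nat,1}.
            (\<Sum>m\<in>{0::nat,1}. L u ?w1 \<gamma> ?d2 m y * L u ?w2 m ?d1 m' x) * Rmat ?w1 ?w2 x y ?b1 ?b2))"
    using RLL_relation[OF True dv(1,2) _ dv(3,4)] by (intro sum.cong refl) simp
  also have "\<dots> = (\<Sum>x\<in>{0::nat,1}. \<Sum>y\<in>{0::nat,1}.
            mono u (swap_adj w (Suc i)) (Suc (Suc i)) \<alpha> \<gamma> \<delta> (\<beta>(Suc i := x, Suc (Suc i) := y))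
            * Rmat ?w1 ?w2 x y ?b1 ?b2)"
    by (simp add: T2 algebra_simps)
  finally show ?thesis .
qed

lemma R_mono_exchange:
  assumes j: "1 \<le> j" "Suc j \<le> n"
    and dv: "\<delta> j \<in> {0,1}" "\<delta> (Suc j) \<in> {0,1}" "\<beta> j \<in> {0,1}" "\<beta> (Suc j) \<in> {0,1}"
  shows "(\<Sum>x\<in>{0::nat,1}. \<Sum>y\<in>{0::nat,1}. Rmat (w j) (w (Suc j)) (\<delta> j) (\<delta> (Suc j)) x y
            * mono u w n \<alpha> \<gamma> (\<delta>(j := x, Suc j := y)) \<beta>)
       = (\<Sum>x\<in>{0::nat,1}. \<Sum>y\<in>{0::nat,1}. mono u (swap_adj w j) n \<alpha> \<gamma> \<delta> (\<beta>(j := x, Suc j := y))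
            * Rmat (w j) (w (Suc j)) x y (\<beta> j) (\<beta> (Suc j)))"
proof -
  obtain i where ji: "j = Suc i" using j(1) by (cases j) auto
  obtain k where nk: "n = Suc j + k" using j(2) le_Suc_ex by blast
  let ?R = "\<lambda>x y. Rmat (w j) (w (Suc j)) (\<delta> j) (\<delta> (Suc j)) x y"
  let ?R' = "\<lambda>x y. Rmat (w j) (w (Suc j)) x y (\<beta> j) (\<beta> (Suc j))"
  have "(\<Sum>x\<in>{0::nat,1}. \<Sum>y\<in>{0::nat,1}. ?R x y * mono u w (Suc j + k) \<alpha> \<gamma> (\<delta>(j := x, Suc j := y)) \<beta>)
      = (\<Sum>x\<in>{0::nat,1}. \<Sum>y\<in>{0::nat,1}. mono u (swap_adj w j) (Suc j + k) \<alpha> \<gamma> \<delta> (\<beta>(j := x, Suc j := y)) * ?R' x y)"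
    for \<gamma>
  proof (induction k arbitrary: \<gamma>)
    case 0
    show ?case unfolding ji add_0_right by (rule R_mono_exchange_top[OF dv[unfolded ji]])
  next
    case (Suc k)
    let ?n = "Suc j + k"
    have ne: "Suc ?n \<noteq> j" "Suc ?n \<noteq> Suc j" by auto
    let ?Lm = "\<lambda>m. L u (w (Suc ?n)) \<gamma> (\<delta> (Suc ?n)) m (\<beta> (Suc ?n))"
    have "(\<Sum>x\<in>{0::nat,1}. \<Sum>y\<in>{0::nat,1}. ?R x y * mono u w (Suc ?n) \<alpha> \<gamma> (\<delta>(j := x, Suc j := y)) \<beta>)
        = (\<Sum>m\<in>{0::nat,1}. ?Lm m * (\<Sum>x\<in>{0::nat,1}. \<Sum>y\<in>{0::nat,1}. ?R x y * mono u w ?n \<alpha> m (\<delta>(j := x, Suc j := y)) \<beta>))"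
      using ne by (simp add: algebra_simps del: add_Suc_right add_Suc)
    also have "\<dots> = (\<Sum>m\<in>{0::nat,1}. ?Lm m * (\<Sum>x\<in>{0::nat,1}. \<Sum>y\<in>{0::nat,1}. mono u (swap_adj w j) ?n \<alpha> m \<delta> (\<beta>(j := x, Suc j := y)) * ?R' x y))"
      by (simp only: Suc.IH)
    also have "\<dots> = (\<Sum>x\<in>{0::nat,1}. \<Sum>y\<in>{0::nat,1}. mono u (swap_adj w j) (Suc ?n) \<alpha> \<gamma> \<delta> (\<beta>(j := x, Suc j := y)) * ?R' x y)"
      using ne by (simp add: algebra_simps del: add_Suc_right add_Suc)
    finally show ?case by (simp only: add_Suc_right)
  qed
  then show ?thesis using nk by simp
qed

definition R_op :: "(nat \<Rightarrow> complex) \<Rightarrow> nat \<Rightarrow> (nat \<Rightarrow> nat) \<Rightarrow> (nat \<Rightarrow> nat) \<Rightarrow> complex" where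
  "R_op w j \<delta> \<gamma> =
     (if agree_outside j \<delta> \<gamma> then Rmat (w j) (w (Suc j)) (\<delta> j) (\<delta> (Suc j)) (\<gamma> j) (\<gamma> (Suc j)) else 0)"

lemma sum_R_op_left:
  assumes "\<delta> \<in> configs N" "1 \<le> j" "Suc j \<le> N"
  shows "(\<Sum>\<gamma>\<in>configs N. R_op w j \<delta> \<gamma> * F \<gamma>)
       = (\<Sum>x\<in>{0::nat,1}. \<Sum>y\<in>{0::nat,1}. Rmat (w j) (w (Suc j)) (\<delta> j) (\<delta> (Suc j)) x y * F (\<delta>(j := x, Suc j := y)))"
proof -
  have "(\<Sum>\<gamma>\<in>configs N. R_op w j \<delta> \<gamma> * F \<gamma>)
      = (\<Sum>\<gamma>\<in>configs N. if agree_outside j \<delta> \<gamma>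
           then Rmat (w j) (w (Suc j)) (\<delta> j) (\<delta> (Suc j)) (\<gamma> j) (\<gamma> (Suc j)) * F \<gamma> else 0)"
    unfolding R_op_def by (intro sum.cong refl) auto
  then show ?thesis by (simp add: sum_configs_agree_outside[OF assms])
qed

lemma sum_R_op_right:
  assumes "\<beta> \<in> configs N" "1 \<le> j" "Suc j \<le> N"
  shows "(\<Sum>\<gamma>\<in>configs N. F \<gamma> * R_op w j \<gamma> \<beta>)
       = (\<Sum>x\<in>{0::nat,1}. \<Sum>y\<in>{0::nat,1}. F (\<beta>(j := x, Suc j := y)) * Rmat (w j) (w (Suc j)) x y (\<beta> j) (\<beta> (Suc j)))"
proof -
  have "(\<Sum>\<gamma>\<in>configs N. F \<gamma> * R_op w j \<gamma> \<beta>)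
      = (\<Sum>\<gamma>\<in>configs N. if agree_outside j \<beta> \<gamma>
           then F \<gamma> * Rmat (w j) (w (Suc j)) (\<gamma> j) (\<gamma> (Suc j)) (\<beta> j) (\<beta> (Suc j)) else 0)"
    unfolding R_op_def by (intro sum.cong refl) (auto simp: agree_outside_commute)
  then show ?thesis by (simp add: sum_configs_agree_outside[OF assms])
qed

lemma R_op_C_exchange:
  assumes \<delta>: "\<delta> \<in> configs N" and \<beta>: "\<beta> \<in> configs N" and j: "1 \<le> j" "Suc j \<le> N"
  shows "(\<Sum>\<gamma>\<in>configs N. R_op w j \<delta> \<gamma> * C N u w \<gamma> \<beta>) = (\<Sum>\<gamma>\<in>configs N. C N u (swap_adj w j) \<delta> \<gamma> * R_op w j \<gamma> \<beta>)"
  unfolding sum_R_op_left[OF \<delta> j] sum_R_op_right[OF \<beta> j] C_eq_mono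
  by (rule R_mono_exchange[OF j]) (use configs_mem[OF \<delta>] configs_mem[OF \<beta>] j in auto)

lemma R_op_ones:
  assumes "\<delta> \<in> configs N" "1 \<le> j" "Suc j \<le> N"
  shows "R_op w j \<delta> (ones N) = (if \<delta> = ones N then a*b*c*d*(t * w (Suc j) - w j) else 0)"
proof -
  have "ones N j = 1" "ones N (Suc j) = 1" "\<delta> j \<in> {0,1}" "\<delta> (Suc j) \<in> {0,1}"
    using assms configs_mem[OF assms(1)] by auto
  then show ?thesis
    using agree_outside_eq_iff[of j \<delta> "ones N"] by (auto simp: R_op_def Rmat_def)
qed

lemma R_op_zeros:
  assumes "\<gamma> \<in> configs N" "1 \<le> j" "Suc j \<le> N"
  shows "R_op w j (zeros N) \<gamma> = (if \<gamma> = zeros N then a*b*c*d*(t * w (Suc j) - w j) else 0)"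
proof -
  have "zeros N j = 0" "zeros N (Suc j) = 0"
    using assms by auto
  then show ?thesis
    using agree_outside_eq_iff[of j "zeros N" \<gamma>] by (auto simp: R_op_def Rmat_def)
qed

lemma R_op_Zv_exchange:
  assumes "\<delta> \<in> configs N" and j: "1 \<le> j" "Suc j \<le> N"
  shows "(\<Sum>\<gamma>\<in>configs N. R_op w j \<delta> \<gamma> * Zv N u w k \<gamma>) = a*b*c*d*(t * w (Suc j) - w j) * Zv N u (swap_adj w j) k \<delta>"
  using assms(1)
proof (induction k arbitrary: \<delta>)
  case 0
  have "(\<Sum>\<gamma>\<in>configs N. R_op w j \<delta> \<gamma> * Zv N u w 0 \<gamma>) = (\<Sum>\<gamma>\<in>configs N. if \<gamma> = ones N then R_op w j \<delta> \<gamma> else 0)"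
    by (intro sum.cong) auto
  then show ?case
    by (simp add: sum.delta finite_configs ones_in_configs R_op_ones[OF "0.prems" j])
next
  case (Suc k)
  show ?case
    unfolding Zvec.simps
    by (rule sum_intertwine[where R = "R_op w j" and C = "C N (u (Suc k)) w"
          and C' = "C N (u (Suc k)) (swap_adj w j)"])
      (rule R_op_C_exchange[OF Suc.prems _ j], assumption, rule Suc.IH, assumption)
qed

lemma Zb_swap_adj_generic:
  assumes j: "1 \<le> j" "Suc j \<le> N" and nz: "t * w (Suc j) \<noteq> w j"
  shows "Zb N u (swap_adj w j) = Zb N u w"
proof -
  let ?\<rho> = "a*b*c*d*(t * w (Suc j) - w j)"
  have "?\<rho> * Zv N u (swap_adj w j) N (zeros N) = (\<Sum>\<gamma>\<in>configs N. R_op w j (zeros N) \<gamma> * Zv N u w N \<gamma>)"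
    by (rule R_op_Zv_exchange[OF zeros_in_configs j, symmetric])
  also have "\<dots> = (\<Sum>\<gamma>\<in>configs N. if \<gamma> = zeros N then ?\<rho> * Zv N u w N \<gamma> else 0)"
    by (intro sum.cong) (auto simp: R_op_zeros[OF _ j])
  also have "\<dots> = ?\<rho> * Zv N u w N (zeros N)"
    by (simp add: sum.delta finite_configs zeros_in_configs)
  finally have "?\<rho> * Zv N u (swap_adj w j) N (zeros N) = ?\<rho> * Zv N u w N (zeros N)" .
  moreover have "?\<rho> \<noteq> 0" using nz a_nz b_nz c_nz d_nz by auto
  ultimately show ?thesis unfolding Zbar_def by simp
qed

end

section \<open>Polynomiality in the spectral parameters\<close>

lemma polyfun_if: "polyfun F n \<Longrightarrow> polyfun G n \<Longrightarrow> polyfun (\<lambda>x. if P then F x else G x) n"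
  by (cases P) auto

context L_operator
begin

lemma L_polyfun_u: "polyfun (\<lambda>y. L y w \<gamma> \<delta> \<alpha> \<beta>) 1"
  unfolding Lop_def by (intro polyfun_if polyfun_add polyfun_scale polyfun_id polyfun_const) auto

lemma L_polyfun_w: "polyfun (\<lambda>y. L u y \<gamma> \<delta> \<alpha> \<beta>) 1"
  unfolding Lop_def by (intro polyfun_if polyfun_add polyfun_scale polyfun_id polyfun_const) auto

lemma L_10_0: "L y w 1 0 0 \<beta> = (if \<beta> = 1 then (1-t)*d*w else 0)"
  by (simp add: Lop_def)

lemma mono_polyfun_u: "polyfun (\<lambda>y. mono y w n \<alpha> \<gamma> \<delta> \<beta>) n"
proof (induction n arbitrary: \<gamma>)
  case (Suc n)
  have "polyfun (\<lambda>y. \<Sum>m\<in>{0::nat,1}. L y (w (Suc n)) \<gamma> (\<delta> (Suc n)) m (\<beta> (Suc n)) * mono y w n \<alpha> m \<delta> \<beta>) (Suc n)"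
    by (rule polyfun_sum) (auto intro!: polyfun_mult_le[OF L_polyfun_u Suc.IH])
  then show ?case by simp
qed simp

lemma mono_polyfun_w: "polyfun (\<lambda>y. mono u (w(i := y)) n \<alpha> \<gamma> \<delta> \<beta>) n"
proof (induction n arbitrary: \<gamma>)
  case (Suc n)
  have L: "polyfun (\<lambda>y. L u ((w(i := y)) (Suc n)) \<gamma> (\<delta> (Suc n)) m (\<beta> (Suc n))) 1" for m
    by (cases "i = Suc n") (simp_all add: L_polyfun_w)
  have "polyfun (\<lambda>y. \<Sum>m\<in>{0::nat,1}. L u ((w(i := y)) (Suc n)) \<gamma> (\<delta> (Suc n)) m (\<beta> (Suc n))
      * mono u (w(i := y)) n \<alpha> m \<delta> \<beta>) (Suc n)"
    by (rule polyfun_sum) (simp, rule polyfun_mult_le[OF L Suc.IH], simp)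
  then show ?case by (simp only: mono.simps)
qed simp

text \<open>Starting from the auxiliary state \<open>0\<close> with all spins down, the first step up of the
  auxiliary walk contributes a factor independent of \<open>u\<close>, which lowers the degree by one.\<close>

lemma mono_zeros_polyfun_u:
  "(\<And>i. 1 \<le> i \<Longrightarrow> i \<le> n \<Longrightarrow> \<delta> i = 0) \<Longrightarrow> polyfun (\<lambda>y. mono y w n 0 1 \<delta> \<beta>) (n - 1)"
proof (induction n)
  case (Suc n)
  have "\<delta> (Suc n) = 0" using Suc.prems by auto
  then have eq: "mono y w (Suc n) 0 1 \<delta> \<beta>
      = (if \<beta> (Suc n) = 1 then (1-t)*d*w (Suc n) else 0) * mono y w n 0 0 \<delta> \<beta>
        + L y (w (Suc n)) 1 0 1 (\<beta> (Suc n)) * mono y w n 0 1 \<delta> \<beta>" for y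
    by (simp add: L_10_0)
  have "polyfun (\<lambda>y. L y (w (Suc n)) 1 0 1 (\<beta> (Suc n)) * mono y w n 0 1 \<delta> \<beta>) n"
  proof (cases n)
    case (Suc m)
    have "polyfun (\<lambda>y. mono y w n 0 1 \<delta> \<beta>) (n - 1)"
      using Suc.IH Suc.prems by simp
    from polyfun_mult_le[OF L_polyfun_u this] show ?thesis using Suc by simp
  qed simp
  then show ?case
    unfolding eq diff_Suc_1 by (rule polyfun_add[OF polyfun_scale[OF mono_polyfun_u]])
qed simp

lemma Zv_u_cong:
  "(\<And>i. 1 \<le> i \<Longrightarrow> i \<le> k \<Longrightarrow> u i = u' i) \<Longrightarrow> Zv N u w k \<delta> = Zv N u' w k \<delta>"
proof (induction k arbitrary: \<delta>)
  case (Suc k)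
  have "u (Suc k) = u' (Suc k)" using Suc.prems by auto
  moreover have "\<And>\<beta>. Zv N u w k \<beta> = Zv N u' w k \<beta>" using Suc by auto
  ultimately show ?case by simp
qed simp

lemma Zv_polyfun_u: "polyfun (\<lambda>y. Zv N (u(i := y)) w k \<delta>) (k * N)"
proof (induction k arbitrary: \<delta>)
  case (Suc k)
  have "polyfun (\<lambda>y. C N ((u(i := y)) (Suc k)) w \<delta> \<beta>) N" for \<beta>
    by (cases "i = Suc k") (simp_all add: C_eq_mono mono_polyfun_u)
  then have "polyfun (\<lambda>y. \<Sum>\<beta>\<in>configs N. C N ((u(i := y)) (Suc k)) w \<delta> \<beta> * Zv N (u(i := y)) w k \<beta>) (Suc k * N)"
    by (intro polyfun_sum[OF finite_configs] polyfun_mult_le[OF _ Suc.IH]) auto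
  then show ?case by (simp only: Zvec.simps)
qed simp

lemma Zv_polyfun_w: "polyfun (\<lambda>y. Zv N u (w(i := y)) k \<delta>) (k * N)"
proof (induction k arbitrary: \<delta>)
  case (Suc k)
  have "polyfun (\<lambda>y. C N (u (Suc k)) (w(i := y)) \<delta> \<beta>) N" for \<beta>
    by (simp add: C_eq_mono mono_polyfun_w)
  then have "polyfun (\<lambda>y. \<Sum>\<beta>\<in>configs N. C N (u (Suc k)) (w(i := y)) \<delta> \<beta> * Zv N u (w(i := y)) k \<beta>) (Suc k * N)"
    by (intro polyfun_sum[OF finite_configs] polyfun_mult_le[OF _ Suc.IH]) auto
  then show ?case by (simp only: Zvec.simps)
qed simp

lemma Zb_polyfun_u_last:
  assumes "1 \<le> N"
  shows "polyfun (\<lambda>y. Zb N (u(N := y)) w) (N - 1)"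
proof -
  obtain M where M: "N = Suc M" using assms by (cases N) auto
  have "polyfun (\<lambda>y. C N y w (zeros N) \<beta>) (N - 1)" for \<beta>
    unfolding C_eq_mono by (rule mono_zeros_polyfun_u) simp
  then have "polyfun (\<lambda>y. \<Sum>\<beta>\<in>configs N. C N y w (zeros N) \<beta> * Zv N u w M \<beta>) (N - 1)"
    by (intro polyfun_sum[OF finite_configs] polyfun_mult_le[OF _ polyfun_const[where n=0]]) auto
  moreover have "Zv N (u(N := y)) w M \<beta> = Zv N u w M \<beta>" for y \<beta>
    by (rule Zv_u_cong) (auto simp: M)
  ultimately show ?thesis unfolding Zbar_def M by simp
qed

text \<open>The generic case extends to all \<open>w\<close> because a polynomial in \<open>w\<^sub>j\<close> vanishing
  off the point \<open>t w\<^sub>j\<^sub>+\<^sub>1\<close> vanishes identically.\<close>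

lemma Zb_swap_adj:
  assumes j: "1 \<le> j" "Suc j \<le> N"
  shows "Zb N u (swap_adj w j) = Zb N u w"
proof -
  let ?F = "\<lambda>y. Zb N u (swap_adj (w(j := y)) j) - Zb N u (w(j := y))"
  have pf: "polyfun ?F (N * N)"
    unfolding Zbar_def
    using Zv_polyfun_w[of N u "w(j := w (Suc j))" "Suc j"] Zv_polyfun_w[of N u w j]
    by (simp add: polyfun_diff)
  have fin: "finite {t * w (Suc j)}" by simp
  have "?F y = 0" if "y \<notin> {t * w (Suc j)}" for y
    using Zb_swap_adj_generic[OF j, of "w(j := y)" u] that by simp
  from polyfun_eq_0_if_cofinite_roots[OF pf fin this] have "?F (w j) = 0" by simp
  then show ?thesis by simp
qed

end

section \<open>Reduction of the partition function at \<open>e u\<^sub>N + f w\<^sub>N = 0\<close>\<close>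

context L_operator
begin

lemma mono_zeros_00:
  "(\<And>i. 1 \<le> i \<Longrightarrow> i \<le> m \<Longrightarrow> \<delta> i = 0) \<Longrightarrow>
    mono y w m 0 0 \<delta> \<beta> = (\<Prod>i=1..m. if \<beta> i = 0 then a*y + b*w i else 0)"
proof (induction m)
  case (Suc m)
  have "\<delta> (Suc m) = 0" using Suc.prems by auto
  then have "mono y w (Suc m) 0 0 \<delta> \<beta>
      = (if \<beta> (Suc m) = 0 then a*y + b*w (Suc m) else 0) * mono y w m 0 0 \<delta> \<beta>"
    by (simp add: Lop_def)
  then show ?case using Suc by (simp add: mult.commute)
qed simp

lemma mono_01_special:
  assumes "\<delta> (Suc m) = 0" "e*y + f*w (Suc m) = 0"
  shows "mono y w (Suc m) 0 1 \<delta> \<beta> = (if \<beta> (Suc m) = 1 then (1-t)*d*w (Suc m) else 0) * mono y w m 0 0 \<delta> \<beta>"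
  using assms by (simp add: Lop_def)

definition last_up :: "nat \<Rightarrow> nat \<Rightarrow> nat" where
  "last_up N = (zeros N)(N := 1)"

lemma last_up_in_configs: "1 \<le> N \<Longrightarrow> last_up N \<in> configs N"
  unfolding last_up_def by (rule configs_fun_upd[OF zeros_in_configs]) auto

text \<open>At \<open>e y + f w\<^sub>N = 0\<close> the weight \<open>[L]\<^sup>1\<^sup>0\<^sub>1\<^sub>0\<close> vanishes, so below \<open>\<langle>\<Omega>|\<close> the auxiliary
  walk can only turn up at the last site; this freezes the row of \<open>u\<^sub>N\<close>.\<close>

lemma C_zeros_special:
  assumes N: "N = Suc M" and ey: "e*y + f*w N = 0" and \<beta>: "\<beta> \<in> configs N"
  shows "C N y w (zeros N) \<beta> = (if \<beta> = last_up N then (1-t)*d*w N * (\<Prod>i=1..M. a*y + b*w i) else 0)"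
proof -
  have "C N y w (zeros N) \<beta> = mono y w (Suc M) 0 1 (zeros N) \<beta>"
    by (simp only: C_eq_mono N)
  also have "\<dots> = (if \<beta> (Suc M) = 1 then (1-t)*d*w (Suc M) else 0) * mono y w M 0 0 (zeros N) \<beta>"
    by (rule mono_01_special) (use ey N in auto)
  also have "mono y w M 0 0 (zeros N) \<beta> = (\<Prod>i=1..M. if \<beta> i = 0 then a*y + b*w i else 0)"
    using N by (intro mono_zeros_00) auto
  finally have C: "C N y w (zeros N) \<beta>
      = (if \<beta> N = 1 then (1-t)*d*w N else 0) * (\<Prod>i=1..M. if \<beta> i = 0 then a*y + b*w i else 0)"
    by (simp only: N)
  show ?thesis
  proof (cases "\<beta> = last_up N")
    case True
    then show ?thesis unfolding C using N by (simp add: last_up_def)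
  next
    case False
    then obtain i where i: "1 \<le> i" "i \<le> N" "\<beta> i \<noteq> last_up N i"
      using configs_eqI[OF \<beta> last_up_in_configs] N by fastforce
    show ?thesis
    proof (cases "i = N")
      case True
      then show ?thesis unfolding C using False i by (simp add: last_up_def)
    next
      case ne: False
      then have "\<beta> i \<noteq> 0" "i \<le> M" using i N by (auto simp: last_up_def)
      then have "(\<Prod>i=1..M. if \<beta> i = 0 then a*y + b*w i else 0) = 0"
        using i by (intro prod_zero) (auto intro!: bexI[where x=i])
      then show ?thesis unfolding C using False by simp
    qed
  qed
qed

lemma Zb_special_first_row:
  assumes N: "N = Suc M" and ey: "e*x + f*w N = 0"
  shows "Zb N (u(N := x)) w = (1-t)*d*w N * (\<Prod>i=1..M. a*x + b*w i) * Zv N u w M (last_up N)"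
proof -
  have "Zv N (u(N := x)) w M \<beta> = Zv N u w M \<beta>" for \<beta>
    by (rule Zv_u_cong) (auto simp: N)
  then have "Zb N (u(N := x)) w = (\<Sum>\<beta>\<in>configs N. C N x w (zeros N) \<beta> * Zv N u w M \<beta>)"
    unfolding Zbar_def N by simp
  also have "\<dots> = (\<Sum>\<beta>\<in>configs N. if \<beta> = last_up N
      then (1-t)*d*w N * (\<Prod>i=1..M. a*x + b*w i) * Zv N u w M \<beta> else 0)"
    by (intro sum.cong refl) (simp add: C_zeros_special[where y=x and w=w, OF N ey])
  also have "\<dots> = (1-t)*d*w N * (\<Prod>i=1..M. a*x + b*w i) * Zv N u w M (last_up N)"
    using last_up_in_configs[of N] N by (simp add: finite_configs)
  finally show ?thesis .
qed

lemma C_last_up: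
  assumes N: "N = Suc M" and "\<delta> N = 1"
  shows "C N y w \<delta> \<beta>
    = (if \<beta> N = 1 then e*y + t*f*w N else 0) * C M y w (restrict \<delta> {1..M}) (restrict \<beta> {1..M})"
proof -
  have "mono y w M 0 1 \<delta> \<beta> = mono y w M 0 1 (restrict \<delta> {1..M}) (restrict \<beta> {1..M})"
    by (rule mono_cong) auto
  moreover have "mono y w (Suc M) 0 1 \<delta> \<beta> = (if \<beta> (Suc M) = 1 then e*y + t*f*w (Suc M) else 0) * mono y w M 0 1 \<delta> \<beta>"
    using assms by (simp add: Lop_def)
  ultimately show ?thesis unfolding C_eq_mono N by simp
qed

lemma ones_iff_restrict_ones:
  assumes N: "N = Suc M" and \<delta>: "\<delta> \<in> configs N" "\<delta> N = 1"
  shows "\<delta> = ones N \<longleftrightarrow> restrict \<delta> {1..M} = ones M"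
proof
  assume "\<delta> = ones N" then show "restrict \<delta> {1..M} = ones M" using N by (auto simp: fun_eq_iff)
next
  assume h: "restrict \<delta> {1..M} = ones M"
  show "\<delta> = ones N"
  proof (rule configs_eqI[OF \<delta>(1) ones_in_configs])
    fix i assume "1 \<le> i" "i \<le> N"
    then show "\<delta> i = ones N i" using \<delta>(2) fun_cong[OF h, of i] N by (cases "i = N") auto
  qed
qed

lemma Zv_last_up:
  assumes N: "N = Suc M"
  shows "\<delta> \<in> configs N \<Longrightarrow> \<delta> N = 1 \<Longrightarrow>
    Zv N u w k \<delta> = (\<Prod>i=1..k. e*u i + t*f*w N) * Zv M u w k (restrict \<delta> {1..M})"
proof (induction k arbitrary: \<delta>)
  case 0
  have "\<delta> = ones N \<longleftrightarrow> restrict \<delta> {1..M} = ones M"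
    by (rule ones_iff_restrict_ones[OF N "0.prems"])
  then show ?case unfolding Zvec.simps by simp
next
  case (Suc k)
  let ?P = "\<lambda>k. \<Prod>i=1..k. e*u i + t*f*w N"
  let ?g = "\<lambda>\<beta>'. (e*u (Suc k) + t*f*w N) * C M (u (Suc k)) w (restrict \<delta> {1..M}) \<beta>' * (?P k * Zv M u w k \<beta>')"
  have "Zv N u w (Suc k) \<delta> = (\<Sum>\<beta>\<in>configs N. C N (u (Suc k)) w \<delta> \<beta> * Zv N u w k \<beta>)"
    by simp
  also have "\<dots> = (\<Sum>\<beta>\<in>configs N. if \<beta> N = 1 then ?g (restrict \<beta> {1..M}) else 0)"
  proof (rule sum.cong[OF refl])
    fix \<beta> assume \<beta>: "\<beta> \<in> configs N"
    note C_N = C_last_up[where y="u (Suc k)" and w=w and \<delta>=\<delta> and \<beta>=\<beta>, OF N Suc.prems(2)]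
    show "C N (u (Suc k)) w \<delta> \<beta> * Zv N u w k \<beta> = (if \<beta> N = 1 then ?g (restrict \<beta> {1..M}) else 0)"
    proof (cases "\<beta> N = 1")
      case True
      show ?thesis unfolding C_N Suc.IH[OF \<beta> True] by (simp only: True simp_thms if_True mult_ac)
    qed (simp add: C_N)
  qed
  also have "\<dots> = (\<Sum>\<beta>'\<in>configs M. ?g \<beta>')" by (rule sum_configs_last_one[OF N])
  also have "\<dots> = ?P (Suc k) * Zv M u w (Suc k) (restrict \<delta> {1..M})"
    by (simp add: sum_distrib_left mult_ac)
  finally show ?case .
qed

lemma Zb_reduction:
  assumes N: "N = Suc M" and ey: "e*x + f*w N = 0"
  shows "Zb N (u(N := x)) w
    = (1-t)*d*w N * (\<Prod>i=1..M. a*x + b*w i) * (\<Prod>i=1..M. e*u i + t*f*w N) * Zb M u w"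
proof -
  have "restrict (last_up N) {1..M} = zeros M"
    using N by (auto simp: last_up_def fun_eq_iff)
  moreover have "last_up N \<in> configs N" "last_up N N = 1"
    using last_up_in_configs[of N] N by (simp_all add: last_up_def)
  moreover have "Zb M u w = Zv M u w M (zeros M)" by (simp add: Zbar_def)
  ultimately show ?thesis
    unfolding Zb_special_first_row[where u=u and x=x and w=w, OF N ey]
    by (simp only: Zv_last_up[where u=u and w=w and k=M, OF N] mult_ac)
qed

end

section \<open>The determinant side\<close>

lemma prod_remove_swap:
  assumes "finite A" "x \<in> A" "y \<in> A" "g x = g y"
  shows "prod g (A - {x}) = prod g (A - {y})"
proof (cases "x = y")
  case False
  have swap: "A - {x} - {y} = A - {y} - {x}" by blast
  have "prod g (A - {x}) = g y * prod g (A - {x} - {y})"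
    using assms False by (intro prod.remove) auto
  also have "\<dots> = g x * prod g (A - {y} - {x})"
    by (simp only: swap assms(4))
  also have "\<dots> = prod g (A - {y})"
    using assms False by (intro prod.remove[symmetric]) auto
  finally show ?thesis .
qed simp

context L_operator
begin

definition denom :: "(nat \<Rightarrow> complex) \<Rightarrow> (nat \<Rightarrow> complex) \<Rightarrow> nat \<Rightarrow> nat \<Rightarrow> complex" where
  "denom u w j k = (a*t*u j + b*w k) * (e*u j + t*f*w k)"

text \<open>The matrix of the theorem with the denominators of row \<open>i\<close> cleared
  (rows and columns are indexed from \<open>0\<close>, the parameters from \<open>1\<close>).\<close>

definition Gmat :: "nat \<Rightarrow> (nat \<Rightarrow> complex) \<Rightarrow> (nat \<Rightarrow> complex) \<Rightarrow> complex mat" where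
  "Gmat N u w = mat N N (\<lambda>(i,k). \<Prod>l\<in>{0..<N}-{k}. denom u w (Suc i) (Suc l))"

definition Gdet :: "nat \<Rightarrow> (nat \<Rightarrow> complex) \<Rightarrow> (nat \<Rightarrow> complex) \<Rightarrow> complex" where
  "Gdet N u w = det (Gmat N u w)"

lemma Gmat_carrier: "Gmat N u w \<in> carrier_mat N N"
  by (simp add: Gmat_def)

lemma Gmat_index:
  "i < N \<Longrightarrow> k < N \<Longrightarrow> Gmat N u w $$ (i,k) = (\<Prod>l\<in>{0..<N}-{k}. denom u w (Suc i) (Suc l))"
  by (simp add: Gmat_def)

lemma Gdet_leibniz:
  "Gdet N u w = (\<Sum>p\<in>{p. p permutes {0..<N}}.
      signof p * (\<Prod>r=0..<N. \<Prod>l\<in>{0..<N}-{p r}. denom u w (Suc r) (Suc l)))"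
  unfolding Gdet_def det_def'[OF Gmat_carrier]
  by (intro sum.cong refl arg_cong2[where f="(*)"] prod.cong)
    (auto simp: Gmat_index permutes_atLeastLessThan_less)

lemma Gdet_eq_prod_det_inverse:
  assumes nz: "\<And>j k. j \<in> {1..N} \<Longrightarrow> k \<in> {1..N} \<Longrightarrow> denom u w j k \<noteq> 0"
  shows "Gdet N u w = (\<Prod>j=1..N. \<Prod>k=1..N. denom u w j k)
    * det (mat N N (\<lambda>(i,k). 1 / denom u w (Suc i) (Suc k)))"
proof -
  let ?r = "\<lambda>i. \<Prod>l\<in>{0..<N}. denom u w (Suc i) (Suc l)"
  have "Gmat N u w = mat N N (\<lambda>(i,k). ?r i * (1 / denom u w (Suc i) (Suc k)))"
  proof (rule eq_matI)
    fix i k assume "i < dim_row (mat N N (\<lambda>(i,k). ?r i * (1 / denom u w (Suc i) (Suc k))))"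
      "k < dim_col (mat N N (\<lambda>(i,k). ?r i * (1 / denom u w (Suc i) (Suc k))))"
    then have ik: "i < N" "k < N" by auto
    then have "?r i = denom u w (Suc i) (Suc k) * (\<Prod>l\<in>{0..<N}-{k}. denom u w (Suc i) (Suc l))"
      using prod.remove[of "{0..<N}" k "\<lambda>l. denom u w (Suc i) (Suc l)"] by simp
    moreover have "denom u w (Suc i) (Suc k) \<noteq> 0" using nz ik by simp
    ultimately show "Gmat N u w $$ (i,k) = mat N N (\<lambda>(i,k). ?r i * (1 / denom u w (Suc i) (Suc k))) $$ (i,k)"
      using ik by (simp add: Gmat_index)
  qed (auto simp: Gmat_def)
  then have "Gdet N u w = (\<Prod>i<N. ?r i) * det (mat N N (\<lambda>(i,k). 1 / denom u w (Suc i) (Suc k)))"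
    unfolding Gdet_def by (simp only: det_mat_scale_rows)
  moreover have "(\<Prod>i<N. ?r i) = (\<Prod>j=1..N. \<Prod>l\<in>{0..<N}. denom u w j (Suc l))"
    by (simp only: One_nat_def prod.atLeast1_atMost_eq)
  moreover have "\<dots> = (\<Prod>j=1..N. \<Prod>k=1..N. denom u w j k)"
    by (rule prod.cong[OF refl]) (simp only: One_nat_def prod.atLeast1_atMost_eq atLeast0LessThan)
  ultimately show ?thesis by simp
qed

lemma Gdet_swap_adj:
  assumes j: "1 \<le> j" "Suc j \<le> N"
  shows "Gdet N u (swap_adj w j) = - Gdet N u w"
proof -
  let ?p = "j - 1" and ?q = j
  define \<tau> where "\<tau> l = (if l = ?p then ?q else if l = ?q then ?p else l)" for l
  have pq: "?p < N" "?q < N" "?p \<noteq> ?q" using j by auto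
  have sw: "(swap_adj w j) (Suc l) = w (Suc (\<tau> l))" for l
    using j by (auto simp: \<tau>_def)
  have inv: "\<tau> (\<tau> l) = l" for l by (auto simp: \<tau>_def)
  have inj: "inj_on \<tau> A" for A by (rule inj_onI) (metis inv)
  have img: "\<tau> ` ({0..<N} - {k}) = {0..<N} - {\<tau> k}" if "k < N" for k
  proof (intro equalityI subsetI)
    fix x assume "x \<in> \<tau> ` ({0..<N} - {k})"
    then show "x \<in> {0..<N} - {\<tau> k}" using pq inv by (auto simp: \<tau>_def split: if_splits)
  next
    fix x assume "x \<in> {0..<N} - {\<tau> k}"
    then show "x \<in> \<tau> ` ({0..<N} - {k})" using pq inv by (intro image_eqI[of _ _ "\<tau> x"]) (auto simp: \<tau>_def)
  qed
  have "Gmat N u (swap_adj w j) = swapcols ?p ?q (Gmat N u w)"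
  proof (rule eq_matI)
    fix i k assume "i < dim_row (swapcols ?p ?q (Gmat N u w))" "k < dim_col (swapcols ?p ?q (Gmat N u w))"
    then have ik: "i < N" "k < N" by (auto simp: Gmat_def)
    have "Gmat N u (swap_adj w j) $$ (i,k) = (\<Prod>l\<in>{0..<N}-{k}. denom u w (Suc i) (Suc (\<tau> l)))"
      by (simp only: Gmat_index[OF ik] denom_def sw)
    also have "\<dots> = (\<Prod>l\<in>{0..<N}-{\<tau> k}. denom u w (Suc i) (Suc l))"
      using prod.reindex[OF inj, of "\<lambda>l. denom u w (Suc i) (Suc l)" "{0..<N}-{k}"] img[OF ik(2)] by simp
    also have "\<dots> = swapcols ?p ?q (Gmat N u w) $$ (i,k)"
      using ik pq by (auto simp: Gmat_index Gmat_def \<tau>_def)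
    finally show "Gmat N u (swap_adj w j) $$ (i,k) = swapcols ?p ?q (Gmat N u w) $$ (i,k)" .
  qed (auto simp: Gmat_def)
  then show ?thesis unfolding Gdet_def using det_swapcols[OF pq Gmat_carrier] by simp
qed

lemma Gdet_eq_0_if_u_eq:
  assumes "i \<noteq> i'" "i \<in> {1..N}" "i' \<in> {1..N}" "u i = u i'"
  shows "Gdet N u w = 0"
  unfolding Gdet_def
proof (rule det_identical_rows[OF Gmat_carrier, of "i - 1" "i' - 1"])
  show "i - 1 \<noteq> i' - 1" "i - 1 < N" "i' - 1 < N" using assms by auto
  show "row (Gmat N u w) (i - 1) = row (Gmat N u w) (i' - 1)"
    using assms by (intro eq_vecI) (auto simp: Gmat_def denom_def)
qed

lemma Gdet_eq_0_if_w_eq: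
  assumes "k \<noteq> k'" "k \<in> {1..N}" "k' \<in> {1..N}" "w k = w k'"
  shows "Gdet N u w = 0"
  unfolding Gdet_def
proof (rule det_identical_columns[OF Gmat_carrier, of "k - 1" "k' - 1"])
  show kk: "k - 1 \<noteq> k' - 1" "k - 1 < N" "k' - 1 < N" using assms by auto
  show "col (Gmat N u w) (k - 1) = col (Gmat N u w) (k' - 1)"
  proof (rule eq_vecI)
    fix i assume "i < dim_vec (col (Gmat N u w) (k' - 1))"
    then have i: "i < N" by (simp add: Gmat_def)
    have "(\<Prod>l\<in>{0..<N}-{k - 1}. denom u w (Suc i) (Suc l)) = (\<Prod>l\<in>{0..<N}-{k' - 1}. denom u w (Suc i) (Suc l))"
      using assms kk by (intro prod_remove_swap) (auto simp: denom_def)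
    moreover have "dim_row (Gmat N u w) = N" "dim_col (Gmat N u w) = N"
      by (simp_all add: Gmat_def)
    ultimately show "col (Gmat N u w) (k - 1) $ i = col (Gmat N u w) (k' - 1) $ i"
      using i kk by (simp only: index_col Gmat_index)
  qed (simp add: Gmat_def)
qed

lemma Gmat_delete_last:
  assumes N: "N = Suc M"
  shows "mat_delete (Gmat N (u(N := x)) w) M M
    = mat M M (\<lambda>(i,k). denom u w (Suc i) N * (\<Prod>l\<in>{0..<M}-{k}. denom u w (Suc i) (Suc l)))"
proof (rule eq_matI)
  fix i k assume "i < dim_row (mat M M (\<lambda>(i,k). denom u w (Suc i) N * (\<Prod>l\<in>{0..<M}-{k}. denom u w (Suc i) (Suc l))))"
    "k < dim_col (mat M M (\<lambda>(i,k). denom u w (Suc i) N * (\<Prod>l\<in>{0..<M}-{k}. denom u w (Suc i) (Suc l))))"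
  then have ik: "i < M" "k < M" by auto
  have "{0..<N} - {k} = insert M ({0..<M} - {k})" using ik N by auto
  moreover have "denom (u(N := x)) w (Suc i) l = denom u w (Suc i) l" for l
    using ik N by (simp add: denom_def)
  ultimately show "mat_delete (Gmat N (u(N := x)) w) M M $$ (i,k)
      = mat M M (\<lambda>(i,k). denom u w (Suc i) N * (\<Prod>l\<in>{0..<M}-{k}. denom u w (Suc i) (Suc l))) $$ (i,k)"
    using ik N by (simp add: mat_delete_def Gmat_def)
qed (auto simp: N Gmat_def)

text \<open>At \<open>a t u\<^sub>N + b w\<^sub>N = 0\<close> the last row of \<open>Gmat\<close> is zero except on the diagonal,
  so the Laplace expansion along it has a single term.\<close>

lemma Gdet_reduction:
  assumes N: "N = Suc M" and ax: "a*t*x + b*w N = 0"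
  shows "Gdet N (u(N := x)) w
    = (\<Prod>l<M. denom (u(N := x)) w N (Suc l)) * ((\<Prod>i<M. denom u w (Suc i) N) * Gdet M u w)"
proof -
  let ?A = "Gmat N (u(N := x)) w"
  have MN: "M < N" using N by simp
  have "?A $$ (M,j) = 0" if "j < M" for j
  proof -
    have "?A $$ (M,j) = (\<Prod>l\<in>{0..<N}-{j}. denom (u(N := x)) w (Suc M) (Suc l))"
      using that N by (simp add: Gmat_index)
    also have "\<dots> = 0"
      using that N ax by (intro prod_zero) (auto simp: denom_def intro!: bexI[where x=M])
    finally show ?thesis .
  qed
  then have "det ?A = ?A $$ (M,M) * cofactor ?A M M"
    unfolding laplace_expansion_row[OF Gmat_carrier MN] using N by simp
  moreover have "?A $$ (M,M) = (\<Prod>l<M. denom (u(N := x)) w N (Suc l))"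
  proof -
    have "{0..<Suc M} - {M} = {..<M}" by auto
    then show ?thesis using N by (simp add: Gmat_index)
  qed
  moreover have "cofactor ?A M M = (\<Prod>i<M. denom u w (Suc i) N) * Gdet M u w"
    by (simp only: cofactor_def Gmat_delete_last[OF N] det_mat_scale_rows) (simp add: Gdet_def Gmat_def)
  ultimately show ?thesis unfolding Gdet_def by simp
qed

lemma denom_polyfun_u: "polyfun (\<lambda>x. denom (u(i := x)) w j k) 2"
proof (cases "j = i")
  case True
  have "polyfun (\<lambda>x. ((a*t) * x + b*w k) * (e * x + t*f*w k)) (1 + 1)"
    by (rule polyfun_mult[OF polyfun_linear polyfun_linear])
  then show ?thesis using True by (simp add: denom_def mult.assoc)
qed (simp add: denom_def)

lemma Gdet_polyfun_u: "polyfun (\<lambda>x. Gdet N (u(i := x)) w) (N * (2*N))"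
  unfolding Gdet_leibniz
proof (intro polyfun_sum polyfun_scale)
  fix p
  show "polyfun (\<lambda>x. \<Prod>r=0..<N. \<Prod>l\<in>{0..<N}-{p r}. denom (u(i := x)) w (Suc r) (Suc l)) (N * (2*N))"
  proof (rule polyfun_prod_le[where d="\<lambda>_. 2*N"])
    fix r
    have "card ({0..<N}-{p r}) \<le> card {0..<N}" by (rule card_mono) auto
    then show "polyfun (\<lambda>x. \<Prod>l\<in>{0..<N}-{p r}. denom (u(i := x)) w (Suc r) (Suc l)) (2*N)"
      by (intro polyfun_prod_le[where d="\<lambda>_. 2"] denom_polyfun_u) auto
  qed auto
qed (simp add: finite_permutations)

lemma Gdet_polyfun_u_last:
  assumes N: "N = Suc M"
  shows "polyfun (\<lambda>x. Gdet N (u(N := x)) w) (2*M)"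
  unfolding Gdet_leibniz
proof (intro polyfun_sum polyfun_scale)
  fix p assume "p \<in> {p. p permutes {0..<N}}"
  then have p: "p r < N" if "r < N" for r using that permutes_atLeastLessThan_less by blast
  show "polyfun (\<lambda>x. \<Prod>r=0..<N. \<Prod>l\<in>{0..<N}-{p r}. denom (u(N := x)) w (Suc r) (Suc l)) (2*M)"
  proof (rule polyfun_prod_le[where d="\<lambda>r. if r = M then 2*M else 0"])
    fix r assume r: "r \<in> {0..<N}"
    show "polyfun (\<lambda>x. \<Prod>l\<in>{0..<N}-{p r}. denom (u(N := x)) w (Suc r) (Suc l)) (if r = M then 2*M else 0)"
    proof (cases "r = M")
      case True
      have "card ({0..<N}-{p r}) = M" using p r N by simp
      then show ?thesis
        using True by (intro polyfun_prod_le[where d="\<lambda>_. 2"] denom_polyfun_u) auto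
    next
      case False
      then have "Suc r \<noteq> N" using r N by auto
      then show ?thesis using False by (simp add: denom_def)
    qed
  qed (use N in auto)
qed (simp add: finite_permutations)

end

section \<open>The identity by induction on \<open>N\<close>\<close>

lemma polyfun_scale_right: "polyfun F n \<Longrightarrow> polyfun (\<lambda>x. F x * k) n"
  using polyfun_mult[OF _ polyfun_const[where n=0]] by simp

lemma diffprod_neg_polyfun: "polyfun (\<lambda>y. diffprod N (\<lambda>j. - (u(i := y)) j)) (N * N)"
  unfolding diffprod_def
proof (rule polyfun_prod_le[where d="\<lambda>_. N"])
  fix k assume k: "k \<in> {1..N}"
  show "polyfun (\<lambda>y. \<Prod>j\<in>{1..<k}. - (u(i := y)) k - - (u(i := y)) j) N"
    using k by (intro polyfun_prod_le[where d="\<lambda>_. 1"] polyfun_diff polyfun_uminus polyfun_fun_upd) auto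
qed auto

lemma diffprod_neg_upd_last:
  assumes "N = Suc M"
  shows "diffprod N (\<lambda>j. - (u(N := x)) j) = diffprod M (\<lambda>j. - u j) * (\<Prod>i=1..M. u i - x)"
proof -
  have "diffprod M (\<lambda>j. - (u(N := x)) j) = diffprod M (\<lambda>j. - u j)"
    by (rule diffprod_cong) (simp add: assms)
  then show ?thesis using assms by (simp add: diffprod_Suc)
qed

context L_operator
begin

definition kappa :: complex where
  "kappa = t^2*c*d"

text \<open>The theorem with all denominators cleared, the determinant being replaced by \<open>Gdet\<close>.\<close>

definition defect :: "nat \<Rightarrow> (nat \<Rightarrow> complex) \<Rightarrow> (nat \<Rightarrow> complex) \<Rightarrow> complex" where
  "defect N u w = Zb N u w * kappa ^ (N*(N-1) div 2) * diffprod N (\<lambda>j. - u j) * diffprod N w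
     - (\<Prod>j=1..N. (1-t)*d*w j) * Gdet N u w"

lemma defect_0: "defect 0 u w = 0"
proof -
  have "restrict (\<lambda>_. 0::nat) {} = restrict (\<lambda>_. 1) {}" by (rule ext) simp
  then have "Zb 0 u w = 1" unfolding Zbar_def by simp
  moreover have "Gdet 0 u w = 1" unfolding Gdet_def using Gmat_carrier[of 0 u w] by simp
  ultimately show ?thesis unfolding defect_def diffprod_def by simp
qed

lemma defect_swap_adj:
  assumes "1 \<le> j" "Suc j \<le> N"
  shows "defect N u (swap_adj w j) = - defect N u w"
proof -
  have "(\<Prod>l=1..N. (1-t)*d*swap_adj w j l) = (\<Prod>l=1..N. (1-t)*d*w l)"
    using assms by (intro prod_swap_adj) auto
  then show ?thesis
    unfolding defect_def Zb_swap_adj[OF assms] diffprod_swap_adj[OF assms] Gdet_swap_adj[OF assms]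
    by (simp add: algebra_simps)
qed

lemma defect_rotate_to_last:
  assumes "1 \<le> k" "k \<le> N"
  shows "defect N u (rotate_to_last k N w) = 0 \<longleftrightarrow> defect N u w = 0"
proof (rule invariant_under_rotate_to_last[where P = "\<lambda>w. defect N u w = 0", OF _ assms])
  fix w j assume "1 \<le> j" "Suc j \<le> N"
  then show "defect N u (swap_adj w j) = 0 \<longleftrightarrow> defect N u w = 0"
    by (simp only: defect_swap_adj neg_equal_0_iff_equal)
qed

lemma defect_eq_0_if_u_eq:
  "i \<noteq> j \<Longrightarrow> i \<in> {1..N} \<Longrightarrow> j \<in> {1..N} \<Longrightarrow> u i = u j \<Longrightarrow> defect N u w = 0"
  unfolding defect_def
  by (simp add: diffprod_eq_0[of i j N "\<lambda>j. - u j"] Gdet_eq_0_if_u_eq[of i j N u])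

lemma defect_eq_0_if_w_eq:
  "i \<noteq> j \<Longrightarrow> i \<in> {1..N} \<Longrightarrow> j \<in> {1..N} \<Longrightarrow> w i = w j \<Longrightarrow> defect N u w = 0"
  unfolding defect_def by (simp add: diffprod_eq_0[of i j N w] Gdet_eq_0_if_w_eq[of i j N w])

lemma defect_polyfun_u: "polyfun (\<lambda>y. defect N (u(i := y)) w) (4 * N * N)"
proof -
  have "polyfun (\<lambda>y. Zb N (u(i := y)) w * kappa ^ (N*(N-1) div 2) * diffprod N (\<lambda>j. - (u(i := y)) j)
      * diffprod N w) (N * N + N * N)"
    using Zv_polyfun_u[of N u i w N] unfolding Zbar_def
    by (intro polyfun_scale_right polyfun_mult polyfun_scale_right diffprod_neg_polyfun)
  moreover have "polyfun (\<lambda>y. (\<Prod>j=1..N. (1-t)*d*w j) * Gdet N (u(i := y)) w) (N * (2*N))"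
    by (intro polyfun_scale Gdet_polyfun_u)
  ultimately show ?thesis
    unfolding defect_def by (intro polyfun_diff) (auto elim!: polyfun_mono)
qed

lemma defect_polyfun_u_last:
  assumes N: "N = Suc M"
  shows "polyfun (\<lambda>x. defect N (u(N := x)) w) (2 * M)"
proof -
  have "polyfun (\<lambda>x. \<Prod>i=1..M. u i - x) M"
    by (rule polyfun_prod_le[where d="\<lambda>_. 1"]) auto
  then have "polyfun (\<lambda>x. diffprod N (\<lambda>j. - (u(N := x)) j)) M"
    unfolding diffprod_neg_upd_last[OF N] by (rule polyfun_scale)
  moreover have "polyfun (\<lambda>x. Zb N (u(N := x)) w) M"
    using Zb_polyfun_u_last[of N u w] N by simp
  ultimately have Z: "polyfun (\<lambda>x. Zb N (u(N := x)) w * kappa ^ (N*(N-1) div 2)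
      * diffprod N (\<lambda>j. - (u(N := x)) j) * diffprod N w) (M + M)"
    by (intro polyfun_scale_right polyfun_mult)
  have G: "polyfun (\<lambda>x. (\<Prod>j=1..N. (1-t)*d*w j) * Gdet N (u(N := x)) w) (M + M)"
    unfolding mult_2[symmetric] by (intro polyfun_scale Gdet_polyfun_u_last[OF N])
  show ?thesis
    unfolding defect_def mult_2 by (rule polyfun_diff[OF Z G])
qed

lemma defect_eq_0_if_cofinite:
  assumes "finite S" "\<And>y. y \<notin> S \<Longrightarrow> defect N (u(i := y)) w = 0"
  shows "defect N u w = 0"
  using polyfun_eq_0_if_cofinite_roots[OF defect_polyfun_u assms, of "u i"] by simp

lemma special_point:
  assumes "e*x + f*w = 0"
  shows "x = -(b*w)/(a*t)"
proof -
  have "c*d*(a*t*x + b*w) = -(a*b)*(e*x + f*w)"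
    using a_nz b_nz by (simp add: e_eq f_eq field_simps)
  then have "a*t*x + b*w = 0" using assms c_nz d_nz by simp
  then show ?thesis using a_nz t_nz by (simp add: field_simps add_eq_0_iff)
qed

text \<open>The factor by which both sides grow in the reduction \<open>N-1 \<rightarrow> N\<close>, one site \<open>i\<close> at a time.\<close>

lemma kappa_factor:
  assumes "x = -(b*w')/(a*t)"
  shows "kappa * ((a*x + b*v) * (e*y + t*f*w') * (y - x) * (w' - v))
    = ((a*t*x + b*v) * (e*x + t*f*v)) * ((a*t*y + b*w') * (e*y + t*f*w'))"
  unfolding assms kappa_def e_eq f_eq using a_nz b_nz c_nz d_nz t_nz
  by (simp add: field_simps) (simp add: algebra_simps power2_eq_square)

lemma defect_special:
  assumes N: "N = Suc M" and ey: "e*x + f*w N = 0" and IH: "defect M u w = 0"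
  shows "defect N (u(N := x)) w = 0"
proof -
  have x: "x = -(b*w N)/(a*t)" by (rule special_point[OF ey])
  have ax: "a*t*x + b*w N = 0" using x a_nz t_nz by (simp add: field_simps)
  let ?A1 = "\<lambda>i. denom (u(N := x)) w N i" and ?A2 = "\<lambda>i. denom u w i N"
  let ?F = "\<lambda>i. (a*x + b*w i) * (e*u i + t*f*w N) * (u i - x) * (w N - w i)"
  have shift: "(\<Prod>l<M. g (Suc l)) = (\<Prod>i=1..M. g i)" for g :: "nat \<Rightarrow> complex"
    by (simp only: One_nat_def prod.atLeast1_atMost_eq)
  have G: "Gdet N (u(N := x)) w = (\<Prod>i=1..M. ?A1 i) * ((\<Prod>i=1..M. ?A2 i) * Gdet M u w)"
    using Gdet_reduction[where u=u and x=x and w=w, OF N ax] shift[of ?A1] shift[of ?A2] by simp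
  have W: "diffprod N w = diffprod M w * (\<Prod>i=1..M. w N - w i)"
    unfolding N diffprod_Suc ..
  have P: "(\<Prod>j=1..N. (1-t)*d*w j) = (\<Prod>j=1..M. (1-t)*d*w j) * ((1-t)*d*w N)"
    unfolding N by simp
  have E: "N * (N - 1) div 2 = M * (M - 1) div 2 + M"
    unfolding N by (rule Suc_times_diff_1_div_2)
  have "kappa^M * (\<Prod>i=1..M. ?F i) = (\<Prod>i=1..M. kappa * ?F i)"
    by (simp add: prod.distrib)
  also have "\<dots> = (\<Prod>i=1..M. ?A1 i * ?A2 i)"
  proof (intro prod.cong refl)
    fix i assume "i \<in> {1..M}"
    then have "i \<noteq> N" using N by auto
    then show "kappa * ?F i = ?A1 i * ?A2 i"
      unfolding denom_def using kappa_factor[OF x, of "w i" "u i"] by simp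
  qed
  finally have key: "kappa^M * (\<Prod>i=1..M. ?F i) = (\<Prod>i=1..M. ?A1 i) * (\<Prod>i=1..M. ?A2 i)"
    by (simp add: prod.distrib)
  have "Zb N (u(N := x)) w * kappa^(N*(N-1) div 2) * diffprod N (\<lambda>j. - (u(N := x)) j) * diffprod N w
      = ((1-t)*d*w N) * (Zb M u w * kappa^(M*(M-1) div 2) * diffprod M (\<lambda>j. - u j) * diffprod M w)
        * (kappa^M * (\<Prod>i=1..M. ?F i))"
    unfolding Zb_reduction[where u=u and x=x and w=w, OF N ey] diffprod_neg_upd_last[OF N] W E power_add prod.distrib
    by (simp only: mult_ac)
  also have "\<dots> = ((1-t)*d*w N) * ((\<Prod>j=1..M. (1-t)*d*w j) * Gdet M u w) * ((\<Prod>i=1..M. ?A1 i) * (\<Prod>i=1..M. ?A2 i))"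
    using IH unfolding defect_def key by simp
  also have "\<dots> = (\<Prod>j=1..N. (1-t)*d*w j) * Gdet N (u(N := x)) w"
    unfolding P G by (simp only: mult_ac)
  finally show ?thesis unfolding defect_def by simp
qed

lemma defect_special_any:
  assumes N: "N = Suc M" and k: "k \<in> {1..N}" and ey: "e*x + f*w k = 0" and IH: "\<And>u w. defect M u w = 0"
  shows "defect N (u(N := x)) w = 0"
proof -
  have "defect N (u(N := x)) (rotate_to_last k N w) = 0"
    using k ey by (intro defect_special[OF N _ IH]) (simp add: rotate_to_last_last)
  then show ?thesis using defect_rotate_to_last k by auto
qed

text \<open>Interpolation in \<open>u\<^sub>N\<close>: the defect has degree \<open>\<le> 2(N-1)\<close> and vanishes at the \<open>2N-1\<close>
  points \<open>u\<^sub>1, \<dots>, u\<^sub>N\<^sub>-\<^sub>1\<close> and \<open>-f w\<^sub>k / e\<close>.\<close>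

lemma defect_Suc_generic:
  assumes N: "N = Suc M" and IH: "\<And>u w. defect M u w = 0"
    and ud: "\<And>i j. i \<in> {1..M} \<Longrightarrow> j \<in> {1..M} \<Longrightarrow> i \<noteq> j \<Longrightarrow> u i \<noteq> u j"
    and wd: "\<And>i j. i \<in> {1..N} \<Longrightarrow> j \<in> {1..N} \<Longrightarrow> i \<noteq> j \<Longrightarrow> w i \<noteq> w j"
    and gen: "\<And>i k. i \<in> {1..M} \<Longrightarrow> k \<in> {1..N} \<Longrightarrow> u i \<noteq> -(f*w k)/e"
  shows "defect N u w = 0"
proof -
  let ?A = "u ` {1..M}" and ?B = "(\<lambda>k. -(f*w k)/e) ` {1..N}"
  have "inj_on u {1..M}" using ud by (meson inj_onI)
  then have cA: "card ?A = M" by (simp add: card_image)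
  have "inj_on (\<lambda>k. -(f*w k)/e) {1..N}"
    using wd f_nz e_nz by (intro inj_onI) (auto simp: field_simps)
  then have cB: "card ?B = N" by (simp add: card_image)
  have "?A \<inter> ?B = {}" using gen by auto
  then have card: "card (?A \<union> ?B) = M + N" using cA cB by (simp add: card_Un_disjoint)
  have roots: "defect N (u(N := x)) w = 0" if x: "x \<in> ?A \<union> ?B" for x
  proof (cases "x \<in> ?A")
    case True
    then obtain j where "j \<in> {1..M}" "x = u j" by auto
    then show ?thesis using N by (intro defect_eq_0_if_u_eq[of j N]) auto
  next
    case False
    then obtain k where "k \<in> {1..N}" "x = -(f*w k)/e" using x by blast
    then show ?thesis using e_nz by (intro defect_special_any[OF N _ _ IH]) (auto simp: field_simps)
  qed
  have "defect N (u(N := u N)) w = 0"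
    by (rule polyfun_eq_0_if_many_roots[where S="?A \<union> ?B", OF defect_polyfun_u_last[OF N] _ _ roots])
      (use card N in auto)
  then show ?thesis by simp
qed

lemma defect_Suc_w_distinct:
  assumes N: "N = Suc M" and IH: "\<And>u w. defect M u w = 0"
    and wd: "\<And>i j. i \<in> {1..N} \<Longrightarrow> j \<in> {1..N} \<Longrightarrow> i \<noteq> j \<Longrightarrow> w i \<noteq> w j"
    and "\<And>i. m < i \<Longrightarrow> i \<le> M \<Longrightarrow> u i \<notin> (\<lambda>k. -(f*w k)/e) ` {1..N}" "m \<le> M"
  shows "defect N u w = 0"
  using assms(4,5)
proof (induction m arbitrary: u)
  case 0
  show ?case
  proof (cases "\<exists>i j. i \<noteq> j \<and> i \<in> {1..M} \<and> j \<in> {1..M} \<and> u i = u j")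
    case True
    then obtain i j where "i \<noteq> j" "i \<in> {1..M}" "j \<in> {1..M}" "u i = u j" by blast
    then show ?thesis using N by (intro defect_eq_0_if_u_eq[of i j]) auto
  next
    case False
    show ?thesis
    proof (rule defect_Suc_generic[OF N IH _ wd])
      show "\<And>i j. i \<in> {1..M} \<Longrightarrow> j \<in> {1..M} \<Longrightarrow> i \<noteq> j \<Longrightarrow> u i \<noteq> u j"
        using False by blast
      show "u i \<noteq> -(f*w k)/e" if "i \<in> {1..M}" "k \<in> {1..N}" for i k
        using "0.prems"(1)[of i] that by auto
    qed
  qed
next
  case (Suc m)
  show ?case
  proof (rule defect_eq_0_if_cofinite[of "(\<lambda>k. -(f*w k)/e) ` {1..N}"])
    fix y assume "y \<notin> (\<lambda>k. -(f*w k)/e) ` {1..N}"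
    then show "defect N (u(Suc m := y)) w = 0" using Suc.prems by (intro Suc.IH) auto
  qed simp
qed

lemma defect_Suc:
  assumes N: "N = Suc M" and IH: "\<And>u w. defect M u w = 0"
  shows "defect N u w = 0"
proof (cases "\<exists>i j. i \<noteq> j \<and> i \<in> {1..N} \<and> j \<in> {1..N} \<and> w i = w j")
  case True
  then obtain i j where "i \<noteq> j" "i \<in> {1..N}" "j \<in> {1..N}" "w i = w j" by blast
  then show ?thesis by (rule defect_eq_0_if_w_eq)
next
  case False
  then show ?thesis by (intro defect_Suc_w_distinct[OF N IH, of w M u]) auto
qed

lemma defect_eq_0: "defect N u w = 0"
proof (induction N arbitrary: u w)
  case 0 then show ?case by (rule defect_0)
next
  case (Suc M) then show ?case by (rule defect_Suc[OF refl])
qed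

end

theorem mainTheorem10:
  fixes t a b c d e f :: complex and N :: nat and u w :: "nat \<Rightarrow> complex"
  assumes "t \<noteq> 0" "a \<noteq> 0" "b \<noteq> 0" "c \<noteq> 0" "d \<noteq> 0" "e \<noteq> 0" "f \<noteq> 0"
    and "t \<noteq> 1"
    and "c*d + a*f = 0" and "t*c*d + b*e = 0"
    and "N \<ge> 1"
    and "\<And>j k. j \<in> {1..N} \<Longrightarrow> k \<in> {1..N} \<Longrightarrow> j \<noteq> k \<Longrightarrow> u j \<noteq> u k"
    and "\<And>j k. j \<in> {1..N} \<Longrightarrow> k \<in> {1..N} \<Longrightarrow> j \<noteq> k \<Longrightarrow> w j \<noteq> w k"
    and "\<And>j k. j \<in> {1..N} \<Longrightarrow> k \<in> {1..N} \<Longrightarrow> (a*t*u j + b*w k)*(e*u j + t*f*w k) \<noteq> 0"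
  shows "Zbar t a b c d e f N u w =
    ((\<Prod>j=1..N. (1-t)*d*w j) * (\<Prod>j=1..N. \<Prod>k=1..N. (a*t*u j + b*w k)*(e*u j + t*f*w k)))
    / ((t^2*c*d)^(N*(N-1) div 2) * (\<Prod>j=1..N. \<Prod>k=j+1..N. (u j - u k)*(w k - w j)))
    * det (mat N N (\<lambda>(j,k). 1 / ((a*t*u (j+1) + b*w (k+1))*(e*u (j+1) + t*f*w (k+1)))))"
proof -
  interpret L_operator t a b c d e f
    using assms by unfold_locales auto
  have "Zb N u w * (kappa ^ (N*(N-1) div 2) * (diffprod N (\<lambda>j. - u j) * diffprod N w))
      = (\<Prod>j=1..N. (1-t)*d*w j) * Gdet N u w"
    using defect_eq_0[of N u w] by (simp add: defect_def mult.assoc)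
  moreover have "Gdet N u w = (\<Prod>j=1..N. \<Prod>k=1..N. denom u w j k)
      * det (mat N N (\<lambda>(j,k). 1 / denom u w (Suc j) (Suc k)))"
    using assms(14) by (intro Gdet_eq_prod_det_inverse) (simp add: denom_def)
  moreover have "(\<Prod>j=1..N. \<Prod>k=j+1..N. (u j - u k)*(w k - w j)) = diffprod N (\<lambda>j. - u j) * diffprod N w"
    unfolding prod_upper_triangle diffprod_def by (simp add: prod.distrib)
  moreover have "kappa ^ (N*(N-1) div 2) * (diffprod N (\<lambda>j. - u j) * diffprod N w) \<noteq> 0"
    using assms(1,4,5,12,13) by (auto simp: kappa_def intro!: diffprod_neq_0)
  ultimately show ?thesis
    unfolding kappa_def denom_def Suc_eq_plus1 by (simp add: field_simps)
qed

end
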